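(* Let $H$ be a $k$-linear Hopf category whose antipode maps $S_{xy}$ are all bijective, let $A$ be a right $H$-comodule category and $B=A^{{\rm co}H}$. Then all maps ${\rm can}'^{y}_{zx}$ ($x,y,z\in X$) are bijective if and only if all maps ${\rm can}^z_{xy}$ ($x,y,z\in X$) are bijective; i.e. $A$ is an $H$-Galois' category extension of $B$ if and only if it is an $H$-Galois category extension of $B$.
   Context: Let $k$ be a commutative ring; unadorned $\otimes$ is over $k$. A $k$-linear category $A$ with class of objects $X$ consists of $k$-modules $A_{xy}$, associative compositions $A_{xy}\otimes A_{yz}\to A_{xz}$, $a\otimes b\mapsto ab$, and units $1_x\in A_{xx}$. A $k$-linear semi-Hopf category $H$ (objects $X$) is a $k$-linear category in which each $H_{xy}$ is a $k$-coalgebra with $\Delta_{xy}(h)=h_{(1)}\otimes h_{(2)}$ and counit $\varepsilon_{xy}$, such that $\Delta_{xz}(hh')=h_{(1)}h'_{(1)}\otimes h_{(2)}h'_{(2)}$, $\Delta_{xx}(1_x)=1_x\otimes1_x$, $\varepsilon_{xz}(hh')=\varepsilon_{xy}(h)\varepsilon_{yz}(h')$, $\varepsilon_{xx}(1_x)=1$. It is a Hopf category if there are $k$-linear maps $S_{xy}:H_{xy}\to H_{yx}$ with $h_{(1)}S_{xy}(h_{(2)})=\varepsilon_{xy}(h)1_x$ and $S_{xy}(h_{(1)})h_{(2)}=\varepsilon_{xy}(h)1_y$. A right $H$-comodule category is a $k$-linear category $A$ with objects $X$ such that each $A_{xy}$ is a right $H_{xy}$-comodule, $\rho_{xy}(a)=a_{[0]}\otimes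 a_{[1]}$, with $\rho_{xz}(ab)=a_{[0]}b_{[0]}\otimes a_{[1]}b_{[1]}$ and $\rho_{xx}(1_x)=1_x\otimes1_x$. Its coinvariants are $B_x=\{a\in A_{xx}\mid\rho_{xx}(a)=a\otimes1_x\}$. The maps are ${\rm can}^z_{xy}:A_{zx}\otimes_{B_x}A_{xy}\to A_{zy}\otimes H_{xy}$, $a\otimes_{B_x}a'\mapsto aa'_{[0]}\otimes a'_{[1]}$, and ${\rm can}'^{y}_{zx}:A_{zx}\otimes_{B_x}A_{xy}\to A_{zy}\otimes H_{zx}$, $a\otimes_{B_x}a'\mapsto a_{[0]}a'\otimes a_{[1]}$. *)

theory Defs
  imports Main
begin

record ('k, 'm) kmod =
  carr :: "'m set"
  addm :: "'m \<Rightarrow> 'm \<Rightarrow> 'm"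
  zerom :: "'m"
  smul :: "'k \<Rightarrow> 'm \<Rightarrow> 'm"

definition kmodule :: "('k::comm_ring_1, 'm) kmod \<Rightarrow> bool" where
  "kmodule M \<longleftrightarrow>
     zerom M \<in> carr M \<and>
     (\<forall>a\<in>carr M. \<forall>b\<in>carr M. addm M a b \<in> carr M) \<and>
     (\<forall>c. \<forall>a\<in>carr M. smul M c a \<in> carr M) \<and>
     (\<forall>a\<in>carr M. \<forall>b\<in>carr M. \<forall>d\<in>carr M. addm M (addm M a b) d = addm M a (addm M b d)) \<and>
     (\<forall>a\<in>carr M. \<forall>b\<in>carr M. addm M a b = addm M b a) \<and>
     (\<forall>a\<in>carr M. addm M (zerom M) a = a) \<and>
     (\<forall>a\<in>carr M. \<exists>b\<in>carr M. addm M a b = zerom M) \<and>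
     (\<forall>c. \<forall>a\<in>carr M. \<forall>b\<in>carr M. smul M c (addm M a b) = addm M (smul M c a) (smul M c b)) \<and>
     (\<forall>c d. \<forall>a\<in>carr M. smul M (c + d) a = addm M (smul M c a) (smul M d a)) \<and>
     (\<forall>c d. \<forall>a\<in>carr M. smul M (c * d) a = smul M c (smul M d a)) \<and>
     (\<forall>a\<in>carr M. smul M 1 a = a)"

definition msum :: "('k, 'm) kmod \<Rightarrow> 'm list \<Rightarrow> 'm" where
  "msum M xs = foldr (addm M) xs (zerom M)"

definition klinear :: "('k, 'm) kmod \<Rightarrow> ('k, 'n) kmod \<Rightarrow> ('m \<Rightarrow> 'n) \<Rightarrow> bool" where
  "klinear M N f \<longleftrightarrow> (\<forall>a\<in>carr M. f a \<in> carr N) \<and>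
     (\<forall>a\<in>carr M. \<forall>b\<in>carr M. f (addm M a b) = addm N (f a) (f b)) \<and>
     (\<forall>c. \<forall>a\<in>carr M. f (smul M c a) = smul N c (f a))"

text \<open>Elements of free k-modules are functions p \<Rightarrow> k; a list of generators (a formal
  sum) is sent to its associated element of the free module.\<close>

definition fr :: "'p list \<Rightarrow> 'p \<Rightarrow> 'k::comm_ring_1" where
  "fr xs = (\<lambda>q. sum_list (map (\<lambda>p. if p = q then 1 else 0) xs))"

definition dl :: "'p \<Rightarrow> 'p \<Rightarrow> 'k::comm_ring_1" where
  "dl p = fr [p]"

inductive_set kspan :: "('p \<Rightarrow> 'k::comm_ring_1) set \<Rightarrow> ('p \<Rightarrow> 'k) set" for G where
  kspan_zero: "(\<lambda>_. 0) \<in> kspan G"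
| kspan_step: "g \<in> G \<Longrightarrow> f \<in> kspan G \<Longrightarrow> (\<lambda>q. c * g q + f q) \<in> kspan G"

definition tgens :: "('k::comm_ring_1, 'a) kmod \<Rightarrow> ('k, 'b) kmod \<Rightarrow> ('a \<times> 'b \<Rightarrow> 'k) set" where
  "tgens M N =
     {(\<lambda>q. dl (addm M a a', b) q - dl (a, b) q - dl (a', b) q) | a a' b.
         a \<in> carr M \<and> a' \<in> carr M \<and> b \<in> carr N}
   \<union> {(\<lambda>q. dl (a, addm N b b') q - dl (a, b) q - dl (a, b') q) | a b b'.
         a \<in> carr M \<and> b \<in> carr N \<and> b' \<in> carr N}
   \<union> {(\<lambda>q. dl (smul M c a, b) q - c * dl (a, b) q) | c a b. a \<in> carr M \<and> b \<in> carr N}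
   \<union> {(\<lambda>q. dl (a, smul N c b) q - c * dl (a, b) q) | c a b. a \<in> carr M \<and> b \<in> carr N}"

text \<open>Equality of two formal sums (lists of elementary tensors a \<otimes> b) in the quotient of
  M \<otimes>_k N by the additional relations p = p' for (p,p') \<in> E.  With E = {} this is
  equality in M \<otimes>_k N.\<close>
definition tens_eq :: "('k::comm_ring_1, 'a) kmod \<Rightarrow> ('k, 'b) kmod \<Rightarrow> (('a \<times> 'b) \<times> ('a \<times> 'b)) set
    \<Rightarrow> ('a \<times> 'b) list \<Rightarrow> ('a \<times> 'b) list \<Rightarrow> bool" where
  "tens_eq M N E xs ys \<longleftrightarrow>
     (\<lambda>q. fr xs q - fr ys q) \<in>
       kspan (tgens M N \<union> {(\<lambda>q. dl p q - dl p' q) | p p'. (p, p') \<in> E})"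

definition tgens3 :: "('k::comm_ring_1, 'a) kmod \<Rightarrow> ('k, 'b) kmod \<Rightarrow> ('k, 'c) kmod
    \<Rightarrow> ('a \<times> 'b \<times> 'c \<Rightarrow> 'k) set" where
  "tgens3 M N P =
     {(\<lambda>q. dl (addm M a a', b, d) q - dl (a, b, d) q - dl (a', b, d) q) | a a' b d.
         a \<in> carr M \<and> a' \<in> carr M \<and> b \<in> carr N \<and> d \<in> carr P}
   \<union> {(\<lambda>q. dl (a, addm N b b', d) q - dl (a, b, d) q - dl (a, b', d) q) | a b b' d.
         a \<in> carr M \<and> b \<in> carr N \<and> b' \<in> carr N \<and> d \<in> carr P}
   \<union> {(\<lambda>q. dl (a, b, addm P d d') q - dl (a, b, d) q - dl (a, b, d') q) | a b d d'.
         a \<in> carr M \<and> b \<in> carr N \<and> d \<in> carr P \<and> d' \<in> carr P}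
   \<union> {(\<lambda>q. dl (smul M c a, b, d) q - c * dl (a, b, d) q) | c a b d.
         a \<in> carr M \<and> b \<in> carr N \<and> d \<in> carr P}
   \<union> {(\<lambda>q. dl (a, smul N c b, d) q - c * dl (a, b, d) q) | c a b d.
         a \<in> carr M \<and> b \<in> carr N \<and> d \<in> carr P}
   \<union> {(\<lambda>q. dl (a, b, smul P c d) q - c * dl (a, b, d) q) | c a b d.
         a \<in> carr M \<and> b \<in> carr N \<and> d \<in> carr P}"

definition tens3_eq :: "('k::comm_ring_1, 'a) kmod \<Rightarrow> ('k, 'b) kmod \<Rightarrow> ('k, 'c) kmod
    \<Rightarrow> ('a \<times> 'b \<times> 'c) list \<Rightarrow> ('a \<times> 'b \<times> 'c) list \<Rightarrow> bool" where
  "tens3_eq M N P xs ys \<longleftrightarrow> (\<lambda>q. fr xs q - fr ys q) \<in> kspan (tgens3 M N P)"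

definition in_tens :: "('k, 'a) kmod \<Rightarrow> ('k, 'b) kmod \<Rightarrow> ('a \<times> 'b) list \<Rightarrow> bool" where
  "in_tens M N xs \<longleftrightarrow> (\<forall>(a, b) \<in> set xs. a \<in> carr M \<and> b \<in> carr N)"

text \<open>A map f on formal sums induces a (well-defined) bijection
  (M \<otimes> N)/E \<rightarrow> (M' \<otimes> N')/E'.\<close>
definition induces_bij ::
  "('k::comm_ring_1, 'a) kmod \<Rightarrow> ('k, 'b) kmod \<Rightarrow> (('a \<times> 'b) \<times> ('a \<times> 'b)) set \<Rightarrow>
   ('k, 'c) kmod \<Rightarrow> ('k, 'd) kmod \<Rightarrow> (('c \<times> 'd) \<times> ('c \<times> 'd)) set \<Rightarrow>
   (('a \<times> 'b) list \<Rightarrow> ('c \<times> 'd) list) \<Rightarrow> bool" where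
  "induces_bij M N E M' N' E' f \<longleftrightarrow>
     (\<forall>xs. in_tens M N xs \<longrightarrow> in_tens M' N' (f xs)) \<and>
     (\<forall>xs ys. in_tens M N xs \<longrightarrow> in_tens M N ys \<longrightarrow>
        (tens_eq M N E xs ys \<longleftrightarrow> tens_eq M' N' E' (f xs) (f ys))) \<and>
     (\<forall>zs. in_tens M' N' zs \<longrightarrow> (\<exists>xs. in_tens M N xs \<and> tens_eq M' N' E' (f xs) zs))"

record ('x, 'k, 'm) kcat =
  hom :: "'x \<Rightarrow> 'x \<Rightarrow> ('k, 'm) kmod"
  comp :: "'x \<Rightarrow> 'x \<Rightarrow> 'x \<Rightarrow> 'm \<Rightarrow> 'm \<Rightarrow> 'm"   \<comment> \<open>comp x y z a b = ab for a \<in> A_xy, b \<in> A_yz\<close>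
  ident :: "'x \<Rightarrow> 'm"

definition klinear_category :: "('x, 'k::comm_ring_1, 'm) kcat \<Rightarrow> bool" where
  "klinear_category A \<longleftrightarrow>
     (\<forall>x y. kmodule (hom A x y)) \<and>
     (\<forall>x y z. \<forall>a\<in>carr (hom A x y). \<forall>b\<in>carr (hom A y z). comp A x y z a b \<in> carr (hom A x z)) \<and>
     (\<forall>x y z. \<forall>a\<in>carr (hom A x y). \<forall>a'\<in>carr (hom A x y). \<forall>b\<in>carr (hom A y z).
        comp A x y z (addm (hom A x y) a a') b = addm (hom A x z) (comp A x y z a b) (comp A x y z a' b)) \<and>
     (\<forall>x y z. \<forall>a\<in>carr (hom A x y). \<forall>b\<in>carr (hom A y z). \<forall>b'\<in>carr (hom A y z).
        comp A x y z a (addm (hom A y z) b b') = addm (hom A x z) (comp A x y z a b) (comp A x y z a b')) \<and>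
     (\<forall>x y z c. \<forall>a\<in>carr (hom A x y). \<forall>b\<in>carr (hom A y z).
        comp A x y z (smul (hom A x y) c a) b = smul (hom A x z) c (comp A x y z a b) \<and>
        comp A x y z a (smul (hom A y z) c b) = smul (hom A x z) c (comp A x y z a b)) \<and>
     (\<forall>x y z w. \<forall>a\<in>carr (hom A x y). \<forall>b\<in>carr (hom A y z). \<forall>d\<in>carr (hom A z w).
        comp A x z w (comp A x y z a b) d = comp A x y w a (comp A y z w b d)) \<and>
     (\<forall>x. ident A x \<in> carr (hom A x x)) \<and>
     (\<forall>x y. \<forall>a\<in>carr (hom A x y). comp A x x y (ident A x) a = a \<and> comp A x y y a (ident A y) = a)"

definition kcoalgebra :: "('k::comm_ring_1, 'm) kmod \<Rightarrow> ('m \<Rightarrow> ('m \<times> 'm) list) \<Rightarrow> ('m \<Rightarrow> 'k) \<Rightarrow> bool" where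
  "kcoalgebra M \<Delta> \<epsilon> \<longleftrightarrow>
     kmodule M \<and>
     (\<forall>a\<in>carr M. in_tens M M (\<Delta> a)) \<and>
     (\<forall>a\<in>carr M. \<forall>b\<in>carr M. tens_eq M M {} (\<Delta> (addm M a b)) (\<Delta> a @ \<Delta> b)) \<and>
     (\<forall>c. \<forall>a\<in>carr M. tens_eq M M {} (\<Delta> (smul M c a)) (map (\<lambda>(u, v). (smul M c u, v)) (\<Delta> a))) \<and>
     (\<forall>a\<in>carr M. \<forall>b\<in>carr M. \<epsilon> (addm M a b) = \<epsilon> a + \<epsilon> b) \<and>
     (\<forall>c. \<forall>a\<in>carr M. \<epsilon> (smul M c a) = c * \<epsilon> a) \<and>
     (\<forall>a\<in>carr M. tens3_eq M M M
        (concat (map (\<lambda>(u, v). map (\<lambda>(p, q). (p, q, v)) (\<Delta> u)) (\<Delta> a)))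
        (concat (map (\<lambda>(u, v). map (\<lambda>(p, q). (u, p, q)) (\<Delta> v)) (\<Delta> a)))) \<and>
     (\<forall>a\<in>carr M. msum M (map (\<lambda>(u, v). smul M (\<epsilon> u) v) (\<Delta> a)) = a \<and>
                 msum M (map (\<lambda>(u, v). smul M (\<epsilon> v) u) (\<Delta> a)) = a)"

definition semi_hopf_category ::
  "('x, 'k::comm_ring_1, 'h) kcat \<Rightarrow> ('x \<Rightarrow> 'x \<Rightarrow> 'h \<Rightarrow> ('h \<times> 'h) list) \<Rightarrow> ('x \<Rightarrow> 'x \<Rightarrow> 'h \<Rightarrow> 'k) \<Rightarrow> bool" where
  "semi_hopf_category H \<Delta> \<epsilon> \<longleftrightarrow>
     klinear_category H \<and>
     (\<forall>x y. kcoalgebra (hom H x y) (\<Delta> x y) (\<epsilon> x y)) \<and>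
     (\<forall>x y z. \<forall>h\<in>carr (hom H x y). \<forall>h'\<in>carr (hom H y z).
        tens_eq (hom H x z) (hom H x z) {} (\<Delta> x z (comp H x y z h h'))
          (concat (map (\<lambda>(u, v). map (\<lambda>(u', v'). (comp H x y z u u', comp H x y z v v')) (\<Delta> y z h')) (\<Delta> x y h)))) \<and>
     (\<forall>x. tens_eq (hom H x x) (hom H x x) {} (\<Delta> x x (ident H x)) [(ident H x, ident H x)]) \<and>
     (\<forall>x y z. \<forall>h\<in>carr (hom H x y). \<forall>h'\<in>carr (hom H y z).
        \<epsilon> x z (comp H x y z h h') = \<epsilon> x y h * \<epsilon> y z h') \<and>
     (\<forall>x. \<epsilon> x x (ident H x) = 1)"

definition hopf_category ::
  "('x, 'k::comm_ring_1, 'h) kcat \<Rightarrow> ('x \<Rightarrow> 'x \<Rightarrow> 'h \<Rightarrow> ('h \<times> 'h) list) \<Rightarrow> ('x \<Rightarrow> 'x \<Rightarrow> 'h \<Rightarrow> 'k)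
    \<Rightarrow> ('x \<Rightarrow> 'x \<Rightarrow> 'h \<Rightarrow> 'h) \<Rightarrow> bool" where
  "hopf_category H \<Delta> \<epsilon> S \<longleftrightarrow>
     semi_hopf_category H \<Delta> \<epsilon> \<and>
     (\<forall>x y. klinear (hom H x y) (hom H y x) (S x y)) \<and>
     (\<forall>x y. \<forall>h\<in>carr (hom H x y).
        msum (hom H x x) (map (\<lambda>(u, v). comp H x y x u (S x y v)) (\<Delta> x y h))
          = smul (hom H x x) (\<epsilon> x y h) (ident H x) \<and>
        msum (hom H y y) (map (\<lambda>(u, v). comp H y x y (S x y u) v) (\<Delta> x y h))
          = smul (hom H y y) (\<epsilon> x y h) (ident H y))"

definition kcomodule ::
  "('k::comm_ring_1, 'a) kmod \<Rightarrow> ('k, 'h) kmod \<Rightarrow> ('h \<Rightarrow> ('h \<times> 'h) list) \<Rightarrow> ('h \<Rightarrow> 'k)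
    \<Rightarrow> ('a \<Rightarrow> ('a \<times> 'h) list) \<Rightarrow> bool" where
  "kcomodule M C \<Delta> \<epsilon> \<rho> \<longleftrightarrow>
     kmodule M \<and>
     (\<forall>m\<in>carr M. in_tens M C (\<rho> m)) \<and>
     (\<forall>m\<in>carr M. \<forall>n\<in>carr M. tens_eq M C {} (\<rho> (addm M m n)) (\<rho> m @ \<rho> n)) \<and>
     (\<forall>c. \<forall>m\<in>carr M. tens_eq M C {} (\<rho> (smul M c m)) (map (\<lambda>(a, h). (smul M c a, h)) (\<rho> m))) \<and>
     (\<forall>m\<in>carr M. tens3_eq M C C
        (concat (map (\<lambda>(a, h). map (\<lambda>(p, q). (p, q, h)) (\<rho> a)) (\<rho> m)))
        (concat (map (\<lambda>(a, h). map (\<lambda>(p, q). (a, p, q)) (\<Delta> h)) (\<rho> m)))) \<and>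
     (\<forall>m\<in>carr M. msum M (map (\<lambda>(a, h). smul M (\<epsilon> h) a) (\<rho> m)) = m)"

definition comodule_category ::
  "('x, 'k::comm_ring_1, 'h) kcat \<Rightarrow> ('x \<Rightarrow> 'x \<Rightarrow> 'h \<Rightarrow> ('h \<times> 'h) list) \<Rightarrow> ('x \<Rightarrow> 'x \<Rightarrow> 'h \<Rightarrow> 'k)
    \<Rightarrow> ('x, 'k, 'a) kcat \<Rightarrow> ('x \<Rightarrow> 'x \<Rightarrow> 'a \<Rightarrow> ('a \<times> 'h) list) \<Rightarrow> bool" where
  "comodule_category H \<Delta> \<epsilon> A \<rho> \<longleftrightarrow>
     klinear_category A \<and>
     (\<forall>x y. kcomodule (hom A x y) (hom H x y) (\<Delta> x y) (\<epsilon> x y) (\<rho> x y)) \<and>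
     (\<forall>x y z. \<forall>a\<in>carr (hom A x y). \<forall>b\<in>carr (hom A y z).
        tens_eq (hom A x z) (hom H x z) {} (\<rho> x z (comp A x y z a b))
          (concat (map (\<lambda>(a0, a1). map (\<lambda>(b0, b1). (comp A x y z a0 b0, comp H x y z a1 b1)) (\<rho> y z b)) (\<rho> x y a)))) \<and>
     (\<forall>x. tens_eq (hom A x x) (hom H x x) {} (\<rho> x x (ident A x)) [(ident A x, ident H x)])"

definition coinv :: "('x, 'k::comm_ring_1, 'h) kcat \<Rightarrow> ('x, 'k, 'a) kcat
    \<Rightarrow> ('x \<Rightarrow> 'x \<Rightarrow> 'a \<Rightarrow> ('a \<times> 'h) list) \<Rightarrow> 'x \<Rightarrow> 'a set" where
  "coinv H A \<rho> x = {a \<in> carr (hom A x x).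
      tens_eq (hom A x x) (hom H x x) {} (\<rho> x x a) [(a, ident H x)]}"

text \<open>Balancing relations defining A_zx \<otimes>_{B_x} A_xy as a quotient of A_zx \<otimes>_k A_xy.\<close>
definition bal_rel :: "('x, 'k::comm_ring_1, 'h) kcat \<Rightarrow> ('x, 'k, 'a) kcat
    \<Rightarrow> ('x \<Rightarrow> 'x \<Rightarrow> 'a \<Rightarrow> ('a \<times> 'h) list) \<Rightarrow> 'x \<Rightarrow> 'x \<Rightarrow> 'x \<Rightarrow> (('a \<times> 'a) \<times> ('a \<times> 'a)) set" where
  "bal_rel H A \<rho> z x y = {((comp A z x x a b, a'), (a, comp A x x y b a')) | a b a'.
      a \<in> carr (hom A z x) \<and> b \<in> coinv H A \<rho> x \<and> a' \<in> carr (hom A x y)}"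

text \<open>can^z_{xy}(a \<otimes> a') = a a'_[0] \<otimes> a'_[1], on formal sums.\<close>
definition can :: "('x, 'k, 'a) kcat \<Rightarrow> ('x \<Rightarrow> 'x \<Rightarrow> 'a \<Rightarrow> ('a \<times> 'h) list) \<Rightarrow> 'x \<Rightarrow> 'x \<Rightarrow> 'x
    \<Rightarrow> ('a \<times> 'a) list \<Rightarrow> ('a \<times> 'h) list" where
  "can A \<rho> z x y xs = concat (map (\<lambda>(a, a'). map (\<lambda>(p, q). (comp A z x y a p, q)) (\<rho> x y a')) xs)"

text \<open>can'^y_{zx}(a \<otimes> a') = a_[0] a' \<otimes> a_[1], on formal sums.\<close>
definition can' :: "('x, 'k, 'a) kcat \<Rightarrow> ('x \<Rightarrow> 'x \<Rightarrow> 'a \<Rightarrow> ('a \<times> 'h) list) \<Rightarrow> 'x \<Rightarrow> 'x \<Rightarrow> 'x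
    \<Rightarrow> ('a \<times> 'a) list \<Rightarrow> ('a \<times> 'h) list" where
  "can' A \<rho> z x y xs = concat (map (\<lambda>(a, a'). map (\<lambda>(p, q). (comp A z x y p a', q)) (\<rho> z x a)) xs)"

end

theory Submission
  imports Defs
begin

text \<open>The two canonical maps differ by an isomorphism. Let \<open>\<tau>\<close> be the composite
  \<open>A\<^sub>z\<^sub>y \<otimes> H\<^sub>x\<^sub>y \<rightarrow> A\<^sub>z\<^sub>y \<otimes> H\<^sub>y\<^sub>x \<rightarrow> A\<^sub>z\<^sub>y \<otimes> H\<^sub>z\<^sub>x\<close>, \<open>c \<otimes> h \<mapsto> c \<otimes> S(h) \<mapsto> c\<^sub>[\<^sub>0\<^sub>] \<otimes> c\<^sub>[\<^sub>1\<^sub>] S(h)\<close>.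
  The first map is bijective because \<open>S\<^sub>x\<^sub>y\<close> is; the second, a twist by the coaction, has the
  inverse \<open>c \<otimes> g \<mapsto> c\<^sub>[\<^sub>0\<^sub>] \<otimes> S(c\<^sub>[\<^sub>1\<^sub>]) g\<close> by coassociativity and the antipode axioms.
  Multiplicativity of the coaction, coassociativity and \<open>h\<^sub>(\<^sub>1\<^sub>) S(h\<^sub>(\<^sub>2\<^sub>)) = \<epsilon>(h) 1\<close> give
  \<open>can' = \<tau> \<circ> can\<close>, so \<open>can'\<close> is bijective if and only if \<open>can\<close> is.\<close>

section \<open>Formal sums modulo relations\<close>

lemma bind_append: "List.bind (xs @ ys) t = List.bind xs t @ List.bind ys t"
  by (induct xs) auto

lemma bind_map: "List.bind (map f xs) t = List.bind xs (\<lambda>x. t (f x))"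
  by (induct xs) auto

lemma bind_bind: "List.bind (List.bind xs u) t = List.bind xs (\<lambda>x. List.bind (u x) t)"
  by (induct xs) (auto simp: bind_append)

lemma map_bind: "map f (List.bind xs t) = List.bind xs (\<lambda>x. map f (t x))"
  by (induct xs) auto

lemma bind_singleton: "List.bind xs (\<lambda>x. [f x]) = map f xs"
  by (induct xs) auto

lemmas bind_normalize = bind_bind bind_map map_bind bind_singleton split_def o_def

lemma kspan_single: "g \<in> G \<Longrightarrow> g \<in> kspan G"
  using kspan_step[of g G "\<lambda>_. 0" 1] by (simp add: kspan_zero)

lemma kspan_cong: "u \<in> kspan G \<Longrightarrow> (\<And>q. u q = v q) \<Longrightarrow> v \<in> kspan G"
  by (metis ext)

lemma kspan_add: "u \<in> kspan G \<Longrightarrow> v \<in> kspan G \<Longrightarrow> (\<lambda>q. u q + v q) \<in> kspan G"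
proof (induction u rule: kspan.induct)
  case kspan_zero
  then show ?case by simp
next
  case (kspan_step g f c)
  then have "(\<lambda>q. c * g q + (f q + v q)) \<in> kspan G"
    by (intro kspan.kspan_step) auto
  then show ?case by (simp add: add.assoc)
qed

lemma kspan_scale: "u \<in> kspan G \<Longrightarrow> (\<lambda>q. c * u q) \<in> kspan G"
proof (induction u rule: kspan.induct)
  case kspan_zero
  then show ?case by (simp add: kspan.kspan_zero)
next
  case (kspan_step g f d)
  then have "(\<lambda>q. (c * d) * g q + c * f q) \<in> kspan G"
    by (intro kspan.kspan_step) auto
  then show ?case by (simp add: algebra_simps)
qed

lemma kspan_diff: "u \<in> kspan G \<Longrightarrow> v \<in> kspan G \<Longrightarrow> (\<lambda>q. u q - v q) \<in> kspan G"
  using kspan_add[of u G "\<lambda>q. (-1) * v q"] kspan_scale[of v G "-1"] by simp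

lemma kspan_finite_support:
  "u \<in> kspan G \<Longrightarrow> (\<And>g. g \<in> G \<Longrightarrow> finite {q. g q \<noteq> 0}) \<Longrightarrow> finite {q. u q \<noteq> (0::'k::comm_ring_1)}"
proof (induction u rule: kspan.induct)
  case kspan_zero
  then show ?case by simp
next
  case (kspan_step g f c)
  have "{q. c * g q + f q \<noteq> 0} \<subseteq> {q. g q \<noteq> 0} \<union> {q. f q \<noteq> 0}" by auto
  with kspan_step show ?case by (meson finite_Un finite_subset)
qed

lemma fr_Nil [simp]: "fr [] q = 0"
  by (simp add: fr_def)

lemma fr_single: "fr [x] q = (if x = q then 1 else 0)"
  by (simp add: fr_def)

lemma fr_Cons: "fr (x # xs) q = fr [x] q + fr xs q"
  by (simp add: fr_def)

lemma fr_append [simp]: "fr (xs @ ys) q = fr xs q + fr ys q"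
  by (simp add: fr_def)

lemma fr_nonzero_in: "fr xs q \<noteq> 0 \<Longrightarrow> q \<in> set xs"
  by (induct xs) (auto simp: fr_def split: if_splits)

lemma finite_support_fr: "finite {q. fr xs q \<noteq> (0::'k::comm_ring_1)}"
  by (rule finite_subset[of _ "set xs"]) (auto dest: fr_nonzero_in)

lemma finite_support_fr_diff: "finite {q. fr xs q - c * fr ys q \<noteq> (0::'k::comm_ring_1)}"
proof (rule finite_subset)
  show "{q. fr xs q - c * fr ys q \<noteq> (0::'k)} \<subseteq> set xs \<union> set ys"
  proof
    fix q assume "q \<in> {q. fr xs q - c * fr ys q \<noteq> (0::'k)}"
    then have "fr xs q \<noteq> (0::'k) \<or> fr ys q \<noteq> (0::'k)" by auto
    then show "q \<in> set xs \<union> set ys" using fr_nonzero_in[of xs q] fr_nonzero_in[of ys q] by blast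
  qed
qed simp

text \<open>Only meaningful on finitely supported \<open>u\<close>; otherwise the sum is junk.\<close>

definition lin_ext :: "('p \<Rightarrow> 'q list) \<Rightarrow> ('p \<Rightarrow> 'k::comm_ring_1) \<Rightarrow> 'q \<Rightarrow> 'k" where
  "lin_ext t u = (\<lambda>r. \<Sum>p | u p \<noteq> 0. u p * fr (t p) r)"

lemma lin_ext_eq_sum:
  "finite S \<Longrightarrow> {p. u p \<noteq> 0} \<subseteq> S \<Longrightarrow> lin_ext t u r = (\<Sum>p\<in>S. u p * fr (t p) r)"
  unfolding lin_ext_def by (rule sum.mono_neutral_left) auto

lemma lin_ext_linear:
  assumes "finite {p. u p \<noteq> 0}" and "finite {p. v p \<noteq> 0}"
  shows "lin_ext t (\<lambda>q. c * u q + v q) r = c * lin_ext t u r + lin_ext t v r"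
proof -
  let ?S = "{p. u p \<noteq> 0} \<union> {p. v p \<noteq> 0}"
  have S: "finite ?S" using assms by simp
  have "lin_ext t (\<lambda>q. c * u q + v q) r = (\<Sum>p\<in>?S. (c * u p + v p) * fr (t p) r)"
    by (rule lin_ext_eq_sum[OF S]) auto
  also have "\<dots> = c * (\<Sum>p\<in>?S. u p * fr (t p) r) + (\<Sum>p\<in>?S. v p * fr (t p) r)"
    by (simp add: sum.distrib sum_distrib_left algebra_simps)
  also have "\<dots> = c * lin_ext t u r + lin_ext t v r"
    using lin_ext_eq_sum[OF S, of u t r] lin_ext_eq_sum[OF S, of v t r] by auto
  finally show ?thesis .
qed

lemma fr_bind: "fr (List.bind xs t) r = (lin_ext t (fr xs) r :: 'k::comm_ring_1)"
proof (induction xs)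
  case Nil
  show ?case by (simp add: lin_ext_def)
next
  case (Cons x xs)
  have single: "lin_ext t (fr [x]) r = (fr (t x) r :: 'k)"
    by (subst lin_ext_eq_sum[of "{x}"]) (auto simp: fr_single split: if_splits)
  have "fr (x # xs) = (\<lambda>q. 1 * fr [x] q + (fr xs q :: 'k))" using fr_Cons[of x xs] by auto
  then have "lin_ext t (fr (x # xs)) r = 1 * lin_ext t (fr [x]) r + (lin_ext t (fr xs) r :: 'k)"
    using lin_ext_linear[OF finite_support_fr finite_support_fr, of t 1 "[x]" xs r] by simp
  with Cons single show ?case by simp
qed

lemma lin_ext_fr_diff:
  "lin_ext t (\<lambda>q. fr xs q - c * fr ys q) r = fr (List.bind xs t) r - c * fr (List.bind ys t) r"
proof -
  have "(\<lambda>q. fr xs q - c * fr ys q) = (\<lambda>q. (- c) * fr ys q + fr xs q)" by auto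
  then show ?thesis
    using lin_ext_linear[of "fr ys" "fr xs" t "- c" r] by (simp add: fr_bind finite_support_fr)
qed

lemma lin_ext_kspan:
  assumes "\<And>g. g \<in> G \<Longrightarrow> finite {q. g q \<noteq> 0} \<and> lin_ext t g \<in> kspan G'"
    and "u \<in> kspan G"
  shows "lin_ext t u \<in> kspan G'"
  using assms(2)
proof (induction u rule: kspan.induct)
  case kspan_zero
  show ?case by (rule kspan_cong[OF kspan.kspan_zero]) (simp add: lin_ext_def)
next
  case (kspan_step g f c)
  have "finite {q. g q \<noteq> 0}" "finite {q. f q \<noteq> 0}"
    using assms(1) kspan_finite_support[OF kspan_step(2)] kspan_step(1) by blast+
  moreover have "(\<lambda>r. c * lin_ext t g r + lin_ext t f r) \<in> kspan G'"
    using assms(1) kspan_step by (intro kspan_add kspan_scale) auto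
  ultimately show ?case by (auto intro: kspan_cong simp: lin_ext_linear)
qed

definition eq_mod :: "('p \<Rightarrow> 'k::comm_ring_1) set \<Rightarrow> 'p list \<Rightarrow> 'p list \<Rightarrow> bool" where
  "eq_mod G xs ys \<longleftrightarrow> (\<lambda>q. fr xs q - fr ys q) \<in> kspan G"

lemma tens_eq_iff_eq_mod: "tens_eq M N {} xs ys \<longleftrightarrow> eq_mod (tgens M N) xs ys"
  by (simp add: tens_eq_def eq_mod_def)

lemma tens3_eq_iff_eq_mod: "tens3_eq M N P xs ys \<longleftrightarrow> eq_mod (tgens3 M N P) xs ys"
  by (simp add: tens3_eq_def eq_mod_def)

lemma eq_mod_by_fr:
  fixes G :: "('p \<Rightarrow> 'k::comm_ring_1) set"
  assumes "\<And>q. fr xs q = (fr ys q :: 'k)"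
  shows "eq_mod G xs ys"
  unfolding eq_mod_def by (rule kspan_cong[OF kspan.kspan_zero]) (simp add: assms)

lemma eq_mod_refl [simp, intro]: "eq_mod G xs xs"
  by (rule eq_mod_by_fr) simp

lemma eq_mod_sym [sym]: "eq_mod G xs ys \<Longrightarrow> eq_mod G ys xs"
  unfolding eq_mod_def by (drule kspan_scale[where c = "-1"]) (erule kspan_cong, simp)

lemma eq_mod_trans [trans]: "eq_mod G xs ys \<Longrightarrow> eq_mod G ys zs \<Longrightarrow> eq_mod G xs zs"
  unfolding eq_mod_def by (drule (1) kspan_add) (erule kspan_cong, simp)

lemma eq_mod_append: "eq_mod G xs ys \<Longrightarrow> eq_mod G xs' ys' \<Longrightarrow> eq_mod G (xs @ xs') (ys @ ys')"
  unfolding eq_mod_def by (drule (1) kspan_add) (erule kspan_cong, simp)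

lemma eq_mod_append_cancel_left: "eq_mod G (xs @ ys) (xs @ zs) \<longleftrightarrow> eq_mod G ys zs"
  unfolding eq_mod_def by simp

lemma fr_bind_append:
  "fr (List.bind xs (\<lambda>x. t x @ t' x)) q = fr (List.bind xs t) q + (fr (List.bind xs t') q :: 'k::comm_ring_1)"
  by (induct xs) (auto simp: algebra_simps)

lemma eq_mod_bind_append:
  "eq_mod G (List.bind xs (\<lambda>x. t x @ t' x)) (List.bind xs t @ List.bind xs t')"
  by (rule eq_mod_by_fr) (simp add: fr_bind_append)

lemma eq_mod_bind_swap:
  "eq_mod G (List.bind xs (\<lambda>x. List.bind ys (f x))) (List.bind ys (\<lambda>y. List.bind xs (\<lambda>x. f x y)))"
proof (rule eq_mod_by_fr, induct xs)
  case Nil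
  show ?case by (induct ys) auto
next
  case (Cons x xs)
  then show ?case by (simp add: fr_bind_append)
qed

lemma eq_mod_bind_pointwise:
  "(\<And>x. x \<in> set xs \<Longrightarrow> eq_mod G (t x) (t' x)) \<Longrightarrow> eq_mod G (List.bind xs t) (List.bind xs t')"
  by (induct xs) (auto intro: eq_mod_append)

definition scaled_eq_mod :: "('p \<Rightarrow> 'k::comm_ring_1) set \<Rightarrow> 'p list \<Rightarrow> 'k \<Rightarrow> 'p list \<Rightarrow> bool" where
  "scaled_eq_mod G xs c ys \<longleftrightarrow> (\<lambda>q. fr xs q - c * fr ys q) \<in> kspan G"

lemma eq_mod_iff_scaled_eq_mod: "eq_mod G xs ys \<longleftrightarrow> scaled_eq_mod G xs 1 ys"
  by (simp add: eq_mod_def scaled_eq_mod_def)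

lemma scaled_eq_mod_cong:
  assumes "eq_mod G xs' xs" and "scaled_eq_mod G xs c ys" and "eq_mod G ys ys'"
  shows "scaled_eq_mod G xs' c ys'"
proof -
  have "(\<lambda>q. (fr xs' q - fr xs q) + ((fr xs q - c * fr ys q) + c * (fr ys q - fr ys' q))) \<in> kspan G"
    using assms unfolding eq_mod_def scaled_eq_mod_def by (intro kspan_add kspan_scale)
  then show ?thesis
    unfolding scaled_eq_mod_def by (rule kspan_cong) (simp add: algebra_simps)
qed

lemma scaled_eq_mod_bind_pointwise:
  assumes "\<And>x. x \<in> set xs \<Longrightarrow> scaled_eq_mod G (t x) c (t' x)"
  shows "scaled_eq_mod G (List.bind xs t) c (List.bind xs t')"
  using assms
proof (induct xs)
  case Nil
  show ?case unfolding scaled_eq_mod_def by (rule kspan_cong[OF kspan.kspan_zero]) simp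
next
  case (Cons x xs)
  then have "(\<lambda>q. (fr (t x) q - c * fr (t' x) q) +
      (fr (List.bind xs t) q - c * fr (List.bind xs t') q)) \<in> kspan G"
    unfolding scaled_eq_mod_def by (intro kspan_add) auto
  then show ?case
    unfolding scaled_eq_mod_def by (rule kspan_cong) (simp add: algebra_simps)
qed

text \<open>\<open>List.bind _ t\<close> is the termwise extension of \<open>t\<close> to formal sums; it descends to the
  quotients once it respects the generating relations.\<close>

lemma eq_mod_bind:
  assumes gens: "\<And>g. g \<in> G \<Longrightarrow>
      \<exists>p c ps. g = (\<lambda>q. fr [p] q - c * fr ps q) \<and> scaled_eq_mod G' (t p) c (List.bind ps t)"
    and "eq_mod G xs ys"
  shows "eq_mod G' (List.bind xs t) (List.bind ys t)"
proof -
  have "lin_ext t (\<lambda>q. fr xs q - fr ys q) \<in> kspan G'"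
  proof (rule lin_ext_kspan)
    fix g assume "g \<in> G"
    then obtain p c ps where g: "g = (\<lambda>q. fr [p] q - c * fr ps q)"
      and "scaled_eq_mod G' (t p) c (List.bind ps t)"
      using gens by blast
    then show "finite {q. g q \<noteq> 0} \<and> lin_ext t g \<in> kspan G'"
      unfolding g scaled_eq_mod_def using finite_support_fr_diff
      by (auto intro: kspan_cong simp: lin_ext_fr_diff)
  qed (use assms(2) in \<open>simp add: eq_mod_def\<close>)
  moreover have "lin_ext t (\<lambda>q. fr xs q - fr ys q) r = fr (List.bind xs t) r - fr (List.bind ys t) r" for r
    using lin_ext_fr_diff[of t xs 1 ys r] by simp
  ultimately show ?thesis
    unfolding eq_mod_def by (rule kspan_cong)
qed

lemma relation_add_as_fr: "(\<lambda>q. dl p q - dl a q - dl b q) = (\<lambda>q. fr [p] q - 1 * fr [a, b] q)"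
  by (auto simp: dl_def fr_def)

lemma relation_smul_as_fr: "(\<lambda>q. dl p q - c * dl a q) = (\<lambda>q. fr [p] q - c * fr [a] q)"
  by (simp add: dl_def)

lemma eq_mod_bind_tensor:
  fixes t :: "'a \<times> 'b \<Rightarrow> 'c list" and G :: "('c \<Rightarrow> 'k::comm_ring_1) set"
  assumes add_left: "\<And>a a' b. a \<in> carr M \<Longrightarrow> a' \<in> carr M \<Longrightarrow> b \<in> carr N \<Longrightarrow>
      eq_mod G (t (addm M a a', b)) (t (a, b) @ t (a', b))"
    and add_right: "\<And>a b b'. a \<in> carr M \<Longrightarrow> b \<in> carr N \<Longrightarrow> b' \<in> carr N \<Longrightarrow>
      eq_mod G (t (a, addm N b b')) (t (a, b) @ t (a, b'))"
    and smul_left: "\<And>c a b. a \<in> carr M \<Longrightarrow> b \<in> carr N \<Longrightarrow>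
      scaled_eq_mod G (t (smul M c a, b)) c (t (a, b))"
    and smul_right: "\<And>c a b. a \<in> carr M \<Longrightarrow> b \<in> carr N \<Longrightarrow>
      scaled_eq_mod G (t (a, smul N c b)) c (t (a, b))"
    and "eq_mod (tgens M N) xs ys"
  shows "eq_mod G (List.bind xs t) (List.bind ys t)"
proof (rule eq_mod_bind[OF _ assms(5)])
  show "\<And>g. g \<in> tgens M N \<Longrightarrow>
      \<exists>p c ps. g = (\<lambda>q. fr [p] q - c * fr ps q) \<and> scaled_eq_mod G (t p) c (List.bind ps t)"
    unfolding tgens_def relation_add_as_fr relation_smul_as_fr
    by (elim UnE CollectE exE conjE; hypsubst; intro exI conjI; (rule refl)?)
      (simp_all add: add_left add_right smul_left smul_right flip: eq_mod_iff_scaled_eq_mod)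
qed

lemma eq_mod_bind_tensor3:
  fixes t :: "'a \<times> 'b \<times> 'd \<Rightarrow> 'c list" and G :: "('c \<Rightarrow> 'k::comm_ring_1) set"
  assumes add1: "\<And>a a' b d. a \<in> carr M \<Longrightarrow> a' \<in> carr M \<Longrightarrow> b \<in> carr N \<Longrightarrow> d \<in> carr P \<Longrightarrow>
      eq_mod G (t (addm M a a', b, d)) (t (a, b, d) @ t (a', b, d))"
    and add2: "\<And>a b b' d. a \<in> carr M \<Longrightarrow> b \<in> carr N \<Longrightarrow> b' \<in> carr N \<Longrightarrow> d \<in> carr P \<Longrightarrow>
      eq_mod G (t (a, addm N b b', d)) (t (a, b, d) @ t (a, b', d))"
    and add3: "\<And>a b d d'. a \<in> carr M \<Longrightarrow> b \<in> carr N \<Longrightarrow> d \<in> carr P \<Longrightarrow> d' \<in> carr P \<Longrightarrow>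
      eq_mod G (t (a, b, addm P d d')) (t (a, b, d) @ t (a, b, d'))"
    and smul1: "\<And>c a b d. a \<in> carr M \<Longrightarrow> b \<in> carr N \<Longrightarrow> d \<in> carr P \<Longrightarrow>
      scaled_eq_mod G (t (smul M c a, b, d)) c (t (a, b, d))"
    and smul2: "\<And>c a b d. a \<in> carr M \<Longrightarrow> b \<in> carr N \<Longrightarrow> d \<in> carr P \<Longrightarrow>
      scaled_eq_mod G (t (a, smul N c b, d)) c (t (a, b, d))"
    and smul3: "\<And>c a b d. a \<in> carr M \<Longrightarrow> b \<in> carr N \<Longrightarrow> d \<in> carr P \<Longrightarrow>
      scaled_eq_mod G (t (a, b, smul P c d)) c (t (a, b, d))"
    and "eq_mod (tgens3 M N P) xs ys"
  shows "eq_mod G (List.bind xs t) (List.bind ys t)"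
proof (rule eq_mod_bind[OF _ assms(7)])
  show "\<And>g. g \<in> tgens3 M N P \<Longrightarrow>
      \<exists>p c ps. g = (\<lambda>q. fr [p] q - c * fr ps q) \<and> scaled_eq_mod G (t p) c (List.bind ps t)"
    unfolding tgens3_def relation_add_as_fr relation_smul_as_fr
    by (elim UnE CollectE exE conjE; hypsubst; intro exI conjI; (rule refl)?)
      (simp_all add: add1 add2 add3 smul1 smul2 smul3 flip: eq_mod_iff_scaled_eq_mod)
qed

lemma msum_Nil [simp]: "msum M [] = zerom M"
  by (simp add: msum_def)

lemma msum_Cons [simp]: "msum M (x # xs) = addm M x (msum M xs)"
  by (simp add: msum_def)

context
  fixes M :: "('k::comm_ring_1, 'm) kmod"
  assumes M: "kmodule M"
begin

lemma kmodule_zero_closed: "zerom M \<in> carr M"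
  using M unfolding kmodule_def by metis

lemma kmodule_add_closed: "a \<in> carr M \<Longrightarrow> b \<in> carr M \<Longrightarrow> addm M a b \<in> carr M"
  using M unfolding kmodule_def by metis

lemma kmodule_smul_closed: "a \<in> carr M \<Longrightarrow> smul M c a \<in> carr M"
  using M unfolding kmodule_def by metis

lemma kmodule_add_assoc:
  "a \<in> carr M \<Longrightarrow> b \<in> carr M \<Longrightarrow> d \<in> carr M \<Longrightarrow> addm M (addm M a b) d = addm M a (addm M b d)"
  using M unfolding kmodule_def by metis

lemma kmodule_add_comm: "a \<in> carr M \<Longrightarrow> b \<in> carr M \<Longrightarrow> addm M a b = addm M b a"
  using M unfolding kmodule_def by metis

lemma kmodule_zero_add: "a \<in> carr M \<Longrightarrow> addm M (zerom M) a = a"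
  using M unfolding kmodule_def by metis

lemma kmodule_add_inverse: "a \<in> carr M \<Longrightarrow> \<exists>b\<in>carr M. addm M a b = zerom M"
  using M unfolding kmodule_def by metis

lemma kmodule_idempotent_eq_zero:
  assumes m: "m \<in> carr M" and idem: "addm M m m = m"
  shows "m = zerom M"
proof -
  obtain b where b: "b \<in> carr M" "addm M m b = zerom M"
    using kmodule_add_inverse[OF m] by blast
  have "m = addm M m (zerom M)"
    using m kmodule_zero_add kmodule_add_comm kmodule_zero_closed by metis
  also have "\<dots> = addm M (addm M m m) b"
    using m b kmodule_add_assoc by metis
  also have "\<dots> = zerom M" using idem b by simp
  finally show ?thesis .
qed

lemma msum_closed: "set xs \<subseteq> carr M \<Longrightarrow> msum M xs \<in> carr M"
  by (induct xs) (auto simp: kmodule_zero_closed kmodule_add_closed)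

end

lemma klinear_id: "klinear M M id"
  by (simp add: klinear_def)

lemma klinear_comp: "klinear M N f \<Longrightarrow> klinear N P g \<Longrightarrow> klinear M P (\<lambda>v. g (f v))"
  by (simp add: klinear_def)

lemma klinear_zero:
  assumes "kmodule M" "kmodule N" "klinear M N f"
  shows "f (zerom M) = zerom N"
proof (rule kmodule_idempotent_eq_zero[OF assms(2)])
  have z: "zerom M \<in> carr M" by (rule kmodule_zero_closed[OF assms(1)])
  then show "f (zerom M) \<in> carr N" using assms(3) by (simp add: klinear_def)
  have "addm N (f (zerom M)) (f (zerom M)) = f (addm M (zerom M) (zerom M))"
    using assms(3) z by (simp add: klinear_def)
  then show "addm N (f (zerom M)) (f (zerom M)) = f (zerom M)"
    using kmodule_zero_add[OF assms(1) z] by simp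
qed

lemma klinear_msum:
  assumes "kmodule M" "kmodule N" "klinear M N f" "set xs \<subseteq> carr M"
  shows "f (msum M xs) = msum N (map f xs)"
  using assms(4)
proof (induct xs)
  case Nil
  then show ?case using klinear_zero[OF assms(1-3)] by simp
next
  case (Cons x xs)
  then show ?case using assms(3) msum_closed[OF assms(1)] by (simp add: klinear_def)
qed

lemma klinear_inv_into:
  assumes M: "kmodule M" and N: "kmodule N" and f: "klinear M N f"
    and bij: "bij_betw f (carr M) (carr N)"
  shows "klinear N M (inv_into (carr M) f)"
proof -
  let ?g = "inv_into (carr M) f"
  have g_closed: "?g b \<in> carr M" if "b \<in> carr N" for b
    using bij that by (metis bij_betw_def inv_into_into)
  have f_g: "f (?g b) = b" if "b \<in> carr N" for b
    using bij that by (simp add: bij_betw_inv_into_right)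
  have g_f: "?g (f a) = a" if "a \<in> carr M" for a
    using bij that by (simp add: bij_betw_inv_into_left)
  show ?thesis
    unfolding klinear_def
  proof (intro conjI ballI allI)
    fix a b assume a: "a \<in> carr N" and b: "b \<in> carr N"
    have "addm N a b = f (addm M (?g a) (?g b))"
      using f g_closed[OF a] g_closed[OF b] by (simp add: klinear_def f_g a b)
    then show "?g (addm N a b) = addm M (?g a) (?g b)"
      using g_f kmodule_add_closed[OF M g_closed[OF a] g_closed[OF b]] by simp
  next
    fix c a assume a: "a \<in> carr N"
    have "smul N c a = f (smul M c (?g a))"
      using f g_closed[OF a] by (simp add: klinear_def f_g a)
    then show "?g (smul N c a) = smul M c (?g a)"
      using g_f kmodule_smul_closed[OF M g_closed[OF a]] by simp
  qed (rule g_closed)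
qed

definition kbilinear ::
  "('k::comm_ring_1, 'a) kmod \<Rightarrow> ('k, 'b) kmod \<Rightarrow> ('k, 'c) kmod \<Rightarrow> ('a \<Rightarrow> 'b \<Rightarrow> 'c) \<Rightarrow> bool" where
  "kbilinear M N P f \<longleftrightarrow> (\<forall>b\<in>carr N. klinear M P (\<lambda>a. f a b)) \<and> (\<forall>a\<in>carr M. klinear N P (f a))"

lemma kbilinear_closed: "kbilinear M N P f \<Longrightarrow> a \<in> carr M \<Longrightarrow> b \<in> carr N \<Longrightarrow> f a b \<in> carr P"
  by (simp add: kbilinear_def klinear_def)

context
  fixes M :: "('k::comm_ring_1, 'a) kmod" and N :: "('k, 'b) kmod"
begin

lemma tens_add_left:
  assumes "a \<in> carr M" "a' \<in> carr M" "b \<in> carr N"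
  shows "eq_mod (tgens M N) [(addm M a a', b)] [(a, b), (a', b)]"
proof -
  have "(\<lambda>q. dl (addm M a a', b) q - dl (a, b) q - dl (a', b) q) \<in> tgens M N"
    unfolding tgens_def using assms by blast
  then show ?thesis
    unfolding eq_mod_def relation_add_as_fr by (auto dest: kspan_single)
qed

lemma tens_add_right:
  assumes "a \<in> carr M" "b \<in> carr N" "b' \<in> carr N"
  shows "eq_mod (tgens M N) [(a, addm N b b')] [(a, b), (a, b')]"
proof -
  have "(\<lambda>q. dl (a, addm N b b') q - dl (a, b) q - dl (a, b') q) \<in> tgens M N"
    unfolding tgens_def using assms by blast
  then show ?thesis
    unfolding eq_mod_def relation_add_as_fr by (auto dest: kspan_single)
qed

lemma tens_smul_left:
  assumes "a \<in> carr M" "b \<in> carr N"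
  shows "scaled_eq_mod (tgens M N) [(smul M c a, b)] c [(a, b)]"
proof -
  have "(\<lambda>q. dl (smul M c a, b) q - c * dl (a, b) q) \<in> tgens M N"
    unfolding tgens_def using assms by blast
  then show ?thesis
    unfolding scaled_eq_mod_def relation_smul_as_fr by (rule kspan_single)
qed

lemma tens_smul_right:
  assumes "a \<in> carr M" "b \<in> carr N"
  shows "scaled_eq_mod (tgens M N) [(a, smul N c b)] c [(a, b)]"
proof -
  have "(\<lambda>q. dl (a, smul N c b) q - c * dl (a, b) q) \<in> tgens M N"
    unfolding tgens_def using assms by blast
  then show ?thesis
    unfolding scaled_eq_mod_def relation_smul_as_fr by (rule kspan_single)
qed

lemma tens_smul_swap:
  assumes "a \<in> carr M" "b \<in> carr N"
  shows "eq_mod (tgens M N) [(smul M c a, b)] [(a, smul N c b)]"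
  using kspan_diff[OF tens_smul_left[OF assms, where c = c, unfolded scaled_eq_mod_def]
      tens_smul_right[OF assms, where c = c, unfolded scaled_eq_mod_def]]
  unfolding eq_mod_def by (rule kspan_cong) simp

lemma tens_zero_left:
  assumes M: "kmodule M" and b: "b \<in> carr N"
  shows "eq_mod (tgens M N) [(zerom M, b)] []"
proof -
  have z: "zerom M \<in> carr M" by (rule kmodule_zero_closed[OF M])
  have "eq_mod (tgens M N) ([(zerom M, b)] @ []) ([(zerom M, b)] @ [(zerom M, b)])"
    using tens_add_left[OF z z b] kmodule_zero_add[OF M z] by simp
  then have "eq_mod (tgens M N) [] [(zerom M, b)]"
    by (simp only: eq_mod_append_cancel_left)
  then show ?thesis by (rule eq_mod_sym)
qed

lemma tens_zero_right:
  assumes N: "kmodule N" and a: "a \<in> carr M"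
  shows "eq_mod (tgens M N) [(a, zerom N)] []"
proof -
  have z: "zerom N \<in> carr N" by (rule kmodule_zero_closed[OF N])
  have "eq_mod (tgens M N) ([(a, zerom N)] @ []) ([(a, zerom N)] @ [(a, zerom N)])"
    using tens_add_right[OF a z z] kmodule_zero_add[OF N z] by simp
  then have "eq_mod (tgens M N) [] [(a, zerom N)]"
    by (simp only: eq_mod_append_cancel_left)
  then show ?thesis by (rule eq_mod_sym)
qed

lemma tens_msum_left:
  assumes M: "kmodule M" and "set xs \<subseteq> carr M" and b: "b \<in> carr N"
  shows "eq_mod (tgens M N) [(msum M xs, b)] (map (\<lambda>a. (a, b)) xs)"
  using assms(2)
proof (induct xs)
  case Nil
  then show ?case using tens_zero_left[OF M b] by simp
next
  case (Cons x xs)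
  then have "eq_mod (tgens M N) [(msum M (x # xs), b)] ([(x, b)] @ [(msum M xs, b)])"
    using tens_add_left[OF _ msum_closed[OF M] b] by simp
  also have "eq_mod (tgens M N) \<dots> ([(x, b)] @ map (\<lambda>a. (a, b)) xs)"
    using Cons by (intro eq_mod_append) auto
  finally show ?case by simp
qed

lemma tens_msum_right:
  assumes N: "kmodule N" and "set ys \<subseteq> carr N" and a: "a \<in> carr M"
  shows "eq_mod (tgens M N) [(a, msum N ys)] (map (\<lambda>b. (a, b)) ys)"
  using assms(2)
proof (induct ys)
  case Nil
  then show ?case using tens_zero_right[OF N a] by simp
next
  case (Cons y ys)
  then have "eq_mod (tgens M N) [(a, msum N (y # ys))] ([(a, y)] @ [(a, msum N ys)])"
    using tens_add_right[OF a _ msum_closed[OF N]] by simp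
  also have "eq_mod (tgens M N) \<dots> ([(a, y)] @ map (\<lambda>b. (a, b)) ys)"
    using Cons by (intro eq_mod_append) auto
  finally show ?case by simp
qed

lemma map_tens_add_right:
  assumes "\<And>p. p \<in> set L \<Longrightarrow> f p \<in> carr M \<and> g p \<in> carr N \<and> g' p \<in> carr N"
  shows "eq_mod (tgens M N) (map (\<lambda>p. (f p, addm N (g p) (g' p))) L)
    (map (\<lambda>p. (f p, g p)) L @ map (\<lambda>p. (f p, g' p)) L)"
proof -
  have "eq_mod (tgens M N) (List.bind L (\<lambda>p. [(f p, addm N (g p) (g' p))]))
      (List.bind L (\<lambda>p. [(f p, g p)] @ [(f p, g' p)]))"
    using assms by (intro eq_mod_bind_pointwise) (auto intro!: tens_add_right)
  also have "eq_mod (tgens M N) \<dots> (List.bind L (\<lambda>p. [(f p, g p)]) @ List.bind L (\<lambda>p. [(f p, g' p)]))"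
    by (rule eq_mod_bind_append)
  finally show ?thesis by (simp only: bind_singleton)
qed

lemma map_tens_smul_left:
  assumes "\<And>p. p \<in> set L \<Longrightarrow> f p \<in> carr M \<and> g p \<in> carr N"
  shows "scaled_eq_mod (tgens M N) (map (\<lambda>p. (smul M c (f p), g p)) L) c (map (\<lambda>p. (f p, g p)) L)"
  unfolding bind_singleton[symmetric]
  by (rule scaled_eq_mod_bind_pointwise) (use assms in \<open>simp add: tens_smul_left\<close>)

lemma map_tens_smul_right:
  assumes "\<And>p. p \<in> set L \<Longrightarrow> f p \<in> carr M \<and> g p \<in> carr N"
  shows "scaled_eq_mod (tgens M N) (map (\<lambda>p. (f p, smul N c (g p))) L) c (map (\<lambda>p. (f p, g p)) L)"
  unfolding bind_singleton[symmetric]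
  by (rule scaled_eq_mod_bind_pointwise) (use assms in \<open>simp add: tens_smul_right\<close>)

end

lemma eq_mod_map_tensor:
  assumes f: "klinear M M' f" and g: "klinear N N' g"
    and "eq_mod (tgens M N) xs ys"
  shows "eq_mod (tgens M' N') (map (map_prod f g) xs) (map (map_prod f g) ys)"
proof -
  have "eq_mod (tgens M' N') (List.bind xs (\<lambda>x. [map_prod f g x])) (List.bind ys (\<lambda>x. [map_prod f g x]))"
    by (rule eq_mod_bind_tensor[OF _ _ _ _ assms(3)])
      (use f g in \<open>simp_all add: klinear_def tens_add_left tens_add_right tens_smul_left tens_smul_right\<close>)
  then show ?thesis by (simp only: bind_singleton)
qed

lemma eq_mod_map_tensor3:
  assumes f: "klinear M M' f" and Q: "kbilinear N P N' Q"
    and "eq_mod (tgens3 M N P) xs ys"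
  shows "eq_mod (tgens M' N') (map (\<lambda>(u, v, w). (f u, Q v w)) xs) (map (\<lambda>(u, v, w). (f u, Q v w)) ys)"
proof -
  have "eq_mod (tgens M' N') (List.bind xs (\<lambda>(u, v, w). [(f u, Q v w)])) (List.bind ys (\<lambda>(u, v, w). [(f u, Q v w)]))"
    by (rule eq_mod_bind_tensor3[OF _ _ _ _ _ _ assms(3)])
      (use f Q in \<open>simp_all add: klinear_def kbilinear_def
          tens_add_left tens_add_right tens_smul_left tens_smul_right\<close>)
  then show ?thesis by (simp add: bind_singleton split_def)
qed

section \<open>Comodules and twisting by the coaction\<close>

lemma comultiplication_mem:
  "kcoalgebra C \<Delta> \<epsilon> \<Longrightarrow> h \<in> carr C \<Longrightarrow> (u, v) \<in> set (\<Delta> h) \<Longrightarrow> u \<in> carr C \<and> v \<in> carr C"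
  unfolding kcoalgebra_def in_tens_def by fastforce

context
  fixes M :: "('k::comm_ring_1, 'a) kmod" and C :: "('k, 'h) kmod" and \<Delta> \<epsilon> \<rho>
  assumes co: "kcomodule M C \<Delta> \<epsilon> \<rho>"
begin

lemma kcomodule_kmodule: "kmodule M"
  using co by (simp add: kcomodule_def)

lemma coaction_mem: "m \<in> carr M \<Longrightarrow> (a, h) \<in> set (\<rho> m) \<Longrightarrow> a \<in> carr M \<and> h \<in> carr C"
  using co unfolding kcomodule_def in_tens_def by fastforce

lemma coaction_add:
  "m \<in> carr M \<Longrightarrow> n \<in> carr M \<Longrightarrow> eq_mod (tgens M C) (\<rho> (addm M m n)) (\<rho> m @ \<rho> n)"
  using co by (simp add: kcomodule_def tens_eq_iff_eq_mod)

lemma coaction_smul: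
  "m \<in> carr M \<Longrightarrow> eq_mod (tgens M C) (\<rho> (smul M c m)) (map (\<lambda>(a, h). (smul M c a, h)) (\<rho> m))"
  using co by (simp add: kcomodule_def tens_eq_iff_eq_mod)

lemma coaction_coassoc:
  "m \<in> carr M \<Longrightarrow> eq_mod (tgens3 M C C)
     (List.bind (\<rho> m) (\<lambda>(a, h). map (\<lambda>(p, q). (p, q, h)) (\<rho> a)))
     (List.bind (\<rho> m) (\<lambda>(a, h). map (\<lambda>(p, q). (a, p, q)) (\<Delta> h)))"
  using co by (simp add: kcomodule_def tens3_eq_iff_eq_mod List.bind_def)

lemma coaction_counit: "m \<in> carr M \<Longrightarrow> msum M (map (\<lambda>(a, h). smul M (\<epsilon> h) a) (\<rho> m)) = m"
  using co by (simp add: kcomodule_def)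

lemma coaction_counit_tensor:
  assumes M': "kmodule M'" and N: "kmodule N" and P: "klinear M M' P"
    and c: "c \<in> carr M" and g: "g \<in> carr N"
  shows "eq_mod (tgens M' N) (map (\<lambda>(c0, c1). (P c0, smul N (\<epsilon> c1) g)) (\<rho> c)) [(P c, g)]"
proof -
  let ?xs = "map (\<lambda>(c0, c1). smul M (\<epsilon> c1) c0) (\<rho> c)"
  have xs: "set ?xs \<subseteq> carr M"
    using coaction_mem[OF c] kmodule_smul_closed[OF kcomodule_kmodule] by auto
  have "eq_mod (tgens M' N) (map (\<lambda>(c0, c1). (P c0, smul N (\<epsilon> c1) g)) (\<rho> c))
      (map (\<lambda>(c0, c1). (smul M' (\<epsilon> c1) (P c0), g)) (\<rho> c))"
    unfolding bind_singleton[symmetric]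
  proof (rule eq_mod_bind_pointwise, clarify)
    fix c0 c1 assume "(c0, c1) \<in> set (\<rho> c)"
    then have "P c0 \<in> carr M'" using coaction_mem[OF c] P by (auto simp: klinear_def)
    then show "eq_mod (tgens M' N) [(P c0, smul N (\<epsilon> c1) g)] [(smul M' (\<epsilon> c1) (P c0), g)]"
      by (rule eq_mod_sym[OF tens_smul_swap[OF _ g]])
  qed
  also have "(map (\<lambda>(c0, c1). (smul M' (\<epsilon> c1) (P c0), g)) (\<rho> c)) = map (\<lambda>a. (a, g)) (map P ?xs)"
    using coaction_mem[OF c] P by (auto simp: klinear_def)
  also have "eq_mod (tgens M' N) \<dots> [(msum M' (map P ?xs), g)]"
    using xs P by (intro eq_mod_sym[OF tens_msum_left[OF M' _ g]]) (auto simp: klinear_def)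
  also have "msum M' (map P ?xs) = P c"
    using klinear_msum[OF kcomodule_kmodule M' P xs] coaction_counit[OF c] by simp
  finally show ?thesis .
qed

end

text \<open>With \<open>\<Phi>\<close> the composition of \<open>H\<close> this is the isomorphism \<open>A\<^sub>z\<^sub>y \<otimes> H\<^sub>y\<^sub>x \<rightarrow> A\<^sub>z\<^sub>y \<otimes> H\<^sub>z\<^sub>x\<close>
  relating the two canonical maps.\<close>

definition coaction_twist ::
  "('a \<Rightarrow> ('a \<times> 'h) list) \<Rightarrow> ('h \<Rightarrow> 'g \<Rightarrow> 'g') \<Rightarrow> ('a \<times> 'g) list \<Rightarrow> ('a \<times> 'g') list" where
  "coaction_twist \<rho> \<Phi> xs = List.bind xs (\<lambda>(c, g). map (\<lambda>(c0, c1). (c0, \<Phi> c1 g)) (\<rho> c))"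

lemma coaction_twist_in_tens:
  assumes co: "kcomodule M C \<Delta> \<epsilon> \<rho>" and \<Phi>: "kbilinear C N N' \<Phi>" and xs: "in_tens M N xs"
  shows "in_tens M N' (coaction_twist \<rho> \<Phi> xs)"
  using xs coaction_mem[OF co] kbilinear_closed[OF \<Phi>]
  by (fastforce simp: coaction_twist_def in_tens_def set_list_bind)

lemma kbilinear_map_tens_add:
  assumes \<Phi>: "kbilinear C N N' \<Phi>" and L: "\<And>p. p \<in> set L \<Longrightarrow> fst p \<in> carr M \<and> snd p \<in> carr C"
    and b: "b \<in> carr N" "b' \<in> carr N"
  shows "eq_mod (tgens M N') (map (\<lambda>p. (fst p, \<Phi> (snd p) (addm N b b'))) L)
    (map (\<lambda>p. (fst p, \<Phi> (snd p) b)) L @ map (\<lambda>p. (fst p, \<Phi> (snd p) b')) L)"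
proof -
  have "map (\<lambda>p. (fst p, \<Phi> (snd p) (addm N b b'))) L
      = map (\<lambda>p. (fst p, addm N' (\<Phi> (snd p) b) (\<Phi> (snd p) b'))) L"
    using L \<Phi> b by (auto simp: kbilinear_def klinear_def)
  also have "eq_mod (tgens M N') \<dots>
      (map (\<lambda>p. (fst p, \<Phi> (snd p) b)) L @ map (\<lambda>p. (fst p, \<Phi> (snd p) b')) L)"
    using L kbilinear_closed[OF \<Phi>] b by (intro map_tens_add_right) auto
  finally show ?thesis .
qed

lemma kbilinear_map_tens_smul:
  assumes \<Phi>: "kbilinear C N N' \<Phi>" and L: "\<And>p. p \<in> set L \<Longrightarrow> fst p \<in> carr M \<and> snd p \<in> carr C"
    and b: "b \<in> carr N"
  shows "scaled_eq_mod (tgens M N') (map (\<lambda>p. (fst p, \<Phi> (snd p) (smul N s b))) L) s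
    (map (\<lambda>p. (fst p, \<Phi> (snd p) b)) L)"
proof -
  have "map (\<lambda>p. (fst p, \<Phi> (snd p) (smul N s b))) L = map (\<lambda>p. (fst p, smul N' s (\<Phi> (snd p) b))) L"
    using L \<Phi> b by (auto simp: kbilinear_def klinear_def)
  moreover have "scaled_eq_mod (tgens M N') \<dots> s (map (\<lambda>p. (fst p, \<Phi> (snd p) b)) L)"
    using L kbilinear_closed[OF \<Phi>] b by (intro map_tens_smul_right) auto
  ultimately show ?thesis by (simp only:)
qed

lemma coaction_twist_eq_mod:
  assumes co: "kcomodule M C \<Delta> \<epsilon> \<rho>" and \<Phi>: "kbilinear C N N' \<Phi>"
    and "eq_mod (tgens M N) xs ys"
  shows "eq_mod (tgens M N') (coaction_twist \<rho> \<Phi> xs) (coaction_twist \<rho> \<Phi> ys)"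
proof -
  let ?t = "\<lambda>(c, g). map (\<lambda>(c0, c1). (c0, \<Phi> c1 g)) (\<rho> c)"
  have t_eq: "?t (c, g) = map (\<lambda>p. (fst p, \<Phi> (snd p) g)) (\<rho> c)" for c g
    by (simp add: split_def)
  have \<Phi>_left: "klinear C N' (\<lambda>h. \<Phi> h g)" if "g \<in> carr N" for g
    using \<Phi> that by (simp add: kbilinear_def)
  have mem: "fst p \<in> carr M \<and> snd p \<in> carr C" if "a \<in> carr M" "p \<in> set (\<rho> a)" for a p
    using coaction_mem[OF co that(1), of "fst p" "snd p"] that(2) by simp
  have "eq_mod (tgens M N') (List.bind xs ?t) (List.bind ys ?t)"
  proof (rule eq_mod_bind_tensor[OF _ _ _ _ assms(3)])
    fix a a' b assume "a \<in> carr M" "a' \<in> carr M" and b: "b \<in> carr N"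
    from eq_mod_map_tensor[OF klinear_id \<Phi>_left[OF b] coaction_add[OF co this(1,2)]]
    show "eq_mod (tgens M N') (?t (addm M a a', b)) (?t (a, b) @ ?t (a', b))"
      by (simp add: split_def map_prod_def)
  next
    fix a b b' assume "a \<in> carr M" "b \<in> carr N" "b' \<in> carr N"
    then show "eq_mod (tgens M N') (?t (a, addm N b b')) (?t (a, b) @ ?t (a, b'))"
      unfolding t_eq using mem by (intro kbilinear_map_tens_add[OF \<Phi>]) auto
  next
    fix s a b assume a: "a \<in> carr M" and b: "b \<in> carr N"
    have "eq_mod (tgens M N') (?t (smul M s a, b)) (map (\<lambda>p. (smul M s (fst p), \<Phi> (snd p) b)) (\<rho> a))"
      using eq_mod_map_tensor[OF klinear_id \<Phi>_left[OF b] coaction_smul[OF co a, of s]]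
      by (simp add: split_def map_prod_def o_def)
    moreover have "scaled_eq_mod (tgens M N') \<dots> s (?t (a, b))"
      unfolding t_eq using mem[OF a] kbilinear_closed[OF \<Phi> _ b] by (intro map_tens_smul_left) auto
    ultimately show "scaled_eq_mod (tgens M N') (?t (smul M s a, b)) s (?t (a, b))"
      by (rule scaled_eq_mod_cong[OF _ _ eq_mod_refl])
  next
    fix s a b assume "a \<in> carr M" "b \<in> carr N"
    then show "scaled_eq_mod (tgens M N') (?t (a, smul N s b)) s (?t (a, b))"
      unfolding t_eq using mem by (intro kbilinear_map_tens_smul[OF \<Phi>]) auto
  qed
  then show ?thesis by (simp only: coaction_twist_def)
qed

lemma coaction_twist_bind:
  "coaction_twist \<rho> \<Phi> (List.bind xs t) = List.bind xs (\<lambda>x. coaction_twist \<rho> \<Phi> (t x))"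
  by (simp add: coaction_twist_def bind_bind)

text \<open>Coassociativity moves \<open>Q\<close> from \<open>c\<^sub>[\<^sub>0\<^sub>]\<^sub>[\<^sub>1\<^sub>] \<otimes> c\<^sub>[\<^sub>1\<^sub>]\<close> onto \<open>c\<^sub>[\<^sub>1\<^sub>]\<^sub>(\<^sub>1\<^sub>) \<otimes> c\<^sub>[\<^sub>1\<^sub>]\<^sub>(\<^sub>2\<^sub>)\<close>, where
  the contraction hypothesis turns it into \<open>\<epsilon>(c\<^sub>[\<^sub>1\<^sub>]) g\<close>, and the counit removes it.\<close>

lemma coaction_contract:
  assumes C: "kcoalgebra C \<Delta> \<epsilon>" and co: "kcomodule M C \<Delta> \<epsilon> \<rho>"
    and M': "kmodule M'" and N: "kmodule N"
    and P: "klinear M M' P" and Q: "kbilinear C C N Q" and g: "g \<in> carr N"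
    and contract: "\<And>h. h \<in> carr C \<Longrightarrow> msum N (map (\<lambda>(u, v). Q u v) (\<Delta> h)) = smul N (\<epsilon> h) g"
    and c: "c \<in> carr M"
  shows "eq_mod (tgens M' N)
    (List.bind (\<rho> c) (\<lambda>(c0, c1). map (\<lambda>(d0, d1). (P d0, Q d1 c1)) (\<rho> c0))) [(P c, g)]"
proof -
  let ?f = "\<lambda>(u, v, w). (P u, Q v w)"
  have "List.bind (\<rho> c) (\<lambda>(c0, c1). map (\<lambda>(d0, d1). (P d0, Q d1 c1)) (\<rho> c0))
      = map ?f (List.bind (\<rho> c) (\<lambda>(a, h). map (\<lambda>(p, q). (p, q, h)) (\<rho> a)))"
    by (simp add: map_bind split_def o_def)
  also have "eq_mod (tgens M' N) \<dots>
      (map ?f (List.bind (\<rho> c) (\<lambda>(a, h). map (\<lambda>(p, q). (a, p, q)) (\<Delta> h))))"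
    by (rule eq_mod_map_tensor3[OF P Q coaction_coassoc[OF co c]])
  also have "\<dots> = List.bind (\<rho> c) (\<lambda>(a, h). map (\<lambda>(p, q). (P a, Q p q)) (\<Delta> h))"
    by (simp add: map_bind split_def o_def)
  also have "eq_mod (tgens M' N) \<dots>
      (List.bind (\<rho> c) (\<lambda>(a, h). [(P a, msum N (map (\<lambda>(u, v). Q u v) (\<Delta> h)))]))"
  proof (rule eq_mod_bind_pointwise, clarify)
    fix a h assume "(a, h) \<in> set (\<rho> c)"
    then have a: "a \<in> carr M" and h: "h \<in> carr C" using coaction_mem[OF co c] by auto
    have "set (map (\<lambda>(u, v). Q u v) (\<Delta> h)) \<subseteq> carr N"
      using comultiplication_mem[OF C h] kbilinear_closed[OF Q] by auto
    moreover have "P a \<in> carr M'" using P a by (simp add: klinear_def)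
    ultimately have "eq_mod (tgens M' N) (map (\<lambda>b. (P a, b)) (map (\<lambda>(u, v). Q u v) (\<Delta> h)))
        [(P a, msum N (map (\<lambda>(u, v). Q u v) (\<Delta> h)))]"
      by (rule eq_mod_sym[OF tens_msum_right[OF N]])
    then show "eq_mod (tgens M' N) (map (\<lambda>(p, q). (P a, Q p q)) (\<Delta> h))
        [(P a, msum N (map (\<lambda>(u, v). Q u v) (\<Delta> h)))]"
      by (simp add: split_def o_def)
  qed
  also have "\<dots> = map (\<lambda>(c0, c1). (P c0, smul N (\<epsilon> c1) g)) (\<rho> c)"
    using coaction_mem[OF co c] contract by (auto simp: bind_singleton[symmetric] intro!: list_bind_cong)
  also have "eq_mod (tgens M' N) \<dots> [(P c, g)]"
    by (rule coaction_counit_tensor[OF co M' N P c g])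
  finally show ?thesis .
qed

lemma coaction_twist_inverse:
  assumes C: "kcoalgebra C \<Delta> \<epsilon>" and co: "kcomodule M C \<Delta> \<epsilon> \<rho>" and N: "kmodule N"
    and \<Phi>: "kbilinear C N N' \<Phi>" and \<Psi>: "kbilinear C N' N \<Psi>"
    and contract: "\<And>h g. h \<in> carr C \<Longrightarrow> g \<in> carr N \<Longrightarrow>
      msum N (map (\<lambda>(u, v). \<Psi> u (\<Phi> v g)) (\<Delta> h)) = smul N (\<epsilon> h) g"
    and xs: "in_tens M N xs"
  shows "eq_mod (tgens M N) (coaction_twist \<rho> \<Psi> (coaction_twist \<rho> \<Phi> xs)) xs"
proof -
  have single: "eq_mod (tgens M N) (coaction_twist \<rho> \<Psi> (coaction_twist \<rho> \<Phi> [(c, g)])) [(c, g)]"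
    if c: "c \<in> carr M" and g: "g \<in> carr N" for c g
  proof -
    have Q: "kbilinear C C N (\<lambda>u v. \<Psi> u (\<Phi> v g))"
      using \<Phi> \<Psi> g kbilinear_closed[OF \<Phi>] by (auto simp: kbilinear_def intro: klinear_comp)
    have "coaction_twist \<rho> \<Psi> (coaction_twist \<rho> \<Phi> [(c, g)])
        = List.bind (\<rho> c) (\<lambda>(c0, c1). map (\<lambda>(d0, d1). (id d0, \<Psi> d1 (\<Phi> c1 g))) (\<rho> c0))"
      by (simp add: coaction_twist_def bind_map split_def)
    also have "eq_mod (tgens M N) \<dots> [(id c, g)]"
      by (rule coaction_contract[OF C co kcomodule_kmodule[OF co] N klinear_id Q g _ c])
        (simp add: contract g)
    finally show ?thesis by simp
  qed
  have "coaction_twist \<rho> \<Psi> (coaction_twist \<rho> \<Phi> xs)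
      = List.bind xs (\<lambda>x. coaction_twist \<rho> \<Psi> (coaction_twist \<rho> \<Phi> [x]))"
    by (simp only: coaction_twist_bind[of _ _ xs "\<lambda>x. [x]", unfolded bind_singleton map_ident]
        coaction_twist_bind)
  also have "eq_mod (tgens M N) \<dots> (List.bind xs (\<lambda>x. [x]))"
    using xs single by (intro eq_mod_bind_pointwise) (auto simp: in_tens_def)
  finally show ?thesis by (simp add: bind_singleton)
qed

lemma induces_bij_by_inverse:
  assumes f_in: "\<And>xs. in_tens M N xs \<Longrightarrow> in_tens M' N' (f xs)"
    and g_in: "\<And>ys. in_tens M' N' ys \<Longrightarrow> in_tens M N (g ys)"
    and f_eq: "\<And>xs ys. eq_mod (tgens M N) xs ys \<Longrightarrow> eq_mod (tgens M' N') (f xs) (f ys)"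
    and g_eq: "\<And>xs ys. eq_mod (tgens M' N') xs ys \<Longrightarrow> eq_mod (tgens M N) (g xs) (g ys)"
    and g_f: "\<And>xs. in_tens M N xs \<Longrightarrow> eq_mod (tgens M N) (g (f xs)) xs"
    and f_g: "\<And>ys. in_tens M' N' ys \<Longrightarrow> eq_mod (tgens M' N') (f (g ys)) ys"
  shows "induces_bij M N {} M' N' {} f"
  unfolding induces_bij_def tens_eq_iff_eq_mod
proof (intro conjI allI impI iffI)
  fix xs ys assume xs: "in_tens M N xs" and ys: "in_tens M N ys"
    and f_xs_ys: "eq_mod (tgens M' N') (f xs) (f ys)"
  have "eq_mod (tgens M N) (g (f xs)) (g (f ys))" by (rule g_eq[OF f_xs_ys])
  then show "eq_mod (tgens M N) xs ys"
    using g_f[OF xs] g_f[OF ys] by (meson eq_mod_sym eq_mod_trans)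
next
  fix zs assume "in_tens M' N' zs"
  then show "\<exists>xs. in_tens M N xs \<and> eq_mod (tgens M' N') (f xs) zs"
    using g_in f_g by blast
qed (use f_in f_eq in auto)

lemma induces_bij_comp:
  assumes f: "induces_bij M N E M' N' {} f" and g: "induces_bij M' N' {} M'' N'' {} g"
  shows "induces_bij M N E M'' N'' {} (\<lambda>xs. g (f xs))"
  unfolding induces_bij_def
proof (intro conjI allI impI)
  fix xs ys assume "in_tens M N xs" "in_tens M N ys"
  with f g show "tens_eq M N E xs ys \<longleftrightarrow> tens_eq M'' N'' {} (g (f xs)) (g (f ys))"
    unfolding induces_bij_def by metis
next
  fix zs assume "in_tens M'' N'' zs"
  with g obtain ws where ws: "in_tens M' N' ws" "tens_eq M'' N'' {} (g ws) zs"
    unfolding induces_bij_def by blast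
  with f obtain xs where xs: "in_tens M N xs" "tens_eq M' N' {} (f xs) ws"
    unfolding induces_bij_def by blast
  with f g ws have "tens_eq M'' N'' {} (g (f xs)) zs"
    unfolding induces_bij_def tens_eq_iff_eq_mod by (metis eq_mod_trans)
  with xs show "\<exists>xs. in_tens M N xs \<and> tens_eq M'' N'' {} (g (f xs)) zs" by blast
qed (use f g in \<open>auto simp: induces_bij_def\<close>)

lemma induces_bij_comp_cancel:
  assumes gf: "induces_bij M N E M'' N'' {} (\<lambda>xs. g (f xs))"
    and g: "induces_bij M' N' {} M'' N'' {} g"
    and f_in: "\<And>xs. in_tens M N xs \<Longrightarrow> in_tens M' N' (f xs)"
  shows "induces_bij M N E M' N' {} f"
  unfolding induces_bij_def
proof (intro conjI allI impI)
  fix xs ys assume "in_tens M N xs" "in_tens M N ys"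
  with gf g f_in show "tens_eq M N E xs ys \<longleftrightarrow> tens_eq M' N' {} (f xs) (f ys)"
    unfolding induces_bij_def by metis
next
  fix ws assume ws: "in_tens M' N' ws"
  with g have "in_tens M'' N'' (g ws)" unfolding induces_bij_def by blast
  with gf obtain xs where xs: "in_tens M N xs" "tens_eq M'' N'' {} (g (f xs)) (g ws)"
    unfolding induces_bij_def by blast
  with g ws f_in have "tens_eq M' N' {} (f xs) ws"
    unfolding induces_bij_def by blast
  with xs show "\<exists>xs. in_tens M N xs \<and> tens_eq M' N' {} (f xs) ws" by blast
qed (rule f_in)

lemma induces_bij_cong:
  assumes f: "induces_bij M N E M' N' {} f"
    and f'_in: "\<And>xs. in_tens M N xs \<Longrightarrow> in_tens M' N' (f' xs)"
    and eq: "\<And>xs. in_tens M N xs \<Longrightarrow> tens_eq M' N' {} (f xs) (f' xs)"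
  shows "induces_bij M N E M' N' {} f'"
  unfolding induces_bij_def
proof (intro conjI allI impI)
  fix xs ys assume xs: "in_tens M N xs" and ys: "in_tens M N ys"
  have "tens_eq M N E xs ys \<longleftrightarrow> tens_eq M' N' {} (f xs) (f ys)"
    using f xs ys unfolding induces_bij_def by blast
  also have "\<dots> \<longleftrightarrow> tens_eq M' N' {} (f' xs) (f' ys)"
    using eq[OF xs] eq[OF ys] unfolding tens_eq_iff_eq_mod by (meson eq_mod_sym eq_mod_trans)
  finally show "tens_eq M N E xs ys \<longleftrightarrow> tens_eq M' N' {} (f' xs) (f' ys)" .
next
  fix zs assume "in_tens M' N' zs"
  with f obtain xs where xs: "in_tens M N xs" "tens_eq M' N' {} (f xs) zs"
    unfolding induces_bij_def by blast
  with eq have "tens_eq M' N' {} (f' xs) zs"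
    unfolding tens_eq_iff_eq_mod by (meson eq_mod_sym eq_mod_trans)
  with xs show "\<exists>xs. in_tens M N xs \<and> tens_eq M' N' {} (f' xs) zs" by blast
qed (rule f'_in)

lemma coaction_twist_induces_bij:
  assumes C: "kcoalgebra C \<Delta> \<epsilon>" and co: "kcomodule M C \<Delta> \<epsilon> \<rho>"
    and N: "kmodule N" and N': "kmodule N'"
    and \<Phi>: "kbilinear C N N' \<Phi>" and \<Psi>: "kbilinear C N' N \<Psi>"
    and \<Psi>_\<Phi>: "\<And>h g. h \<in> carr C \<Longrightarrow> g \<in> carr N \<Longrightarrow>
      msum N (map (\<lambda>(u, v). \<Psi> u (\<Phi> v g)) (\<Delta> h)) = smul N (\<epsilon> h) g"
    and \<Phi>_\<Psi>: "\<And>h g. h \<in> carr C \<Longrightarrow> g \<in> carr N' \<Longrightarrow>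
      msum N' (map (\<lambda>(u, v). \<Phi> u (\<Psi> v g)) (\<Delta> h)) = smul N' (\<epsilon> h) g"
  shows "induces_bij M N {} M N' {} (coaction_twist \<rho> \<Phi>)"
  by (rule induces_bij_by_inverse[where g = "coaction_twist \<rho> \<Psi>"])
    (auto intro: coaction_twist_in_tens coaction_twist_eq_mod coaction_twist_inverse assms)

lemma map_apsnd_induces_bij:
  assumes N: "kmodule N" and N': "kmodule N'" and S: "klinear N N' S"
    and bij: "bij_betw S (carr N) (carr N')"
  shows "induces_bij M N {} M N' {} (map (apsnd S))"
proof -
  let ?T = "inv_into (carr N) S"
  have T: "klinear N' N ?T" by (rule klinear_inv_into[OF N N' S bij])
  show ?thesis
  proof (rule induces_bij_by_inverse[where g = "map (apsnd ?T)"])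
    fix xs assume xs: "in_tens M N xs"
    have "map (apsnd ?T \<circ> apsnd S) xs = xs"
    proof (rule map_idI, clarify)
      fix a b assume "(a, b) \<in> set xs"
      then show "(apsnd ?T \<circ> apsnd S) (a, b) = (a, b)"
        using xs bij by (auto simp: in_tens_def bij_betw_inv_into_left)
    qed
    then show "eq_mod (tgens M N) (map (apsnd ?T) (map (apsnd S) xs)) xs" by simp
  next
    fix ys assume ys: "in_tens M N' ys"
    have "map (apsnd S \<circ> apsnd ?T) ys = ys"
    proof (rule map_idI, clarify)
      fix a b assume "(a, b) \<in> set ys"
      then show "(apsnd S \<circ> apsnd ?T) (a, b) = (a, b)"
        using ys bij by (auto simp: in_tens_def bij_betw_inv_into_right)
    qed
    then show "eq_mod (tgens M N') (map (apsnd S) (map (apsnd ?T) ys)) ys" by simp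
  next
    fix xs ys assume "eq_mod (tgens M N) xs ys"
    then show "eq_mod (tgens M N') (map (apsnd S) xs) (map (apsnd S) ys)"
      unfolding apsnd_def by (rule eq_mod_map_tensor[OF klinear_id S])
  next
    fix xs ys assume "eq_mod (tgens M N') xs ys"
    then show "eq_mod (tgens M N) (map (apsnd ?T) xs) (map (apsnd ?T) ys)"
      unfolding apsnd_def by (rule eq_mod_map_tensor[OF klinear_id T])
  qed (use S T in \<open>auto simp: in_tens_def klinear_def\<close>)
qed

section \<open>Hopf categories and the canonical maps\<close>

context
  fixes K :: "('x, 'k::comm_ring_1, 'm) kcat"
  assumes K: "klinear_category K"
begin

lemma kcat_kmodule: "kmodule (hom K x y)"
  using K by (simp add: klinear_category_def)

lemma kcat_comp_closed:
  "a \<in> carr (hom K x y) \<Longrightarrow> b \<in> carr (hom K y z) \<Longrightarrow> comp K x y z a b \<in> carr (hom K x z)"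
  using K by (simp add: klinear_category_def)

lemma kcat_comp_assoc:
  "a \<in> carr (hom K x y) \<Longrightarrow> b \<in> carr (hom K y z) \<Longrightarrow> d \<in> carr (hom K z w) \<Longrightarrow>
    comp K x z w (comp K x y z a b) d = comp K x y w a (comp K y z w b d)"
  using K by (simp add: klinear_category_def)

lemma kcat_comp_kbilinear: "kbilinear (hom K x y) (hom K y z) (hom K x z) (comp K x y z)"
  using K by (simp add: kbilinear_def klinear_def klinear_category_def)

lemma kcat_linear_right: "b \<in> carr (hom K y z) \<Longrightarrow> klinear (hom K x y) (hom K x z) (\<lambda>a. comp K x y z a b)"
  using kcat_comp_kbilinear[of x y z] unfolding kbilinear_def by blast

lemma kcat_linear_left: "a \<in> carr (hom K x y) \<Longrightarrow> klinear (hom K y z) (hom K x z) (comp K x y z a)"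
  using kcat_comp_kbilinear[of x y z] unfolding kbilinear_def by blast

lemma kcat_smul_ident_comp:
  "b \<in> carr (hom K x y) \<Longrightarrow> comp K x x y (smul (hom K x x) c (ident K x)) b = smul (hom K x y) c b"
  using K by (simp add: klinear_category_def)

lemma kcat_comp_smul_ident:
  "a \<in> carr (hom K x y) \<Longrightarrow> comp K x y y a (smul (hom K y y) c (ident K y)) = smul (hom K x y) c a"
  using K by (simp add: klinear_category_def)

lemma kcat_msum_comp:
  assumes "set as \<subseteq> carr (hom K x y)" and "b \<in> carr (hom K y z)"
  shows "comp K x y z (msum (hom K x y) as) b = msum (hom K x z) (map (\<lambda>a. comp K x y z a b) as)"
  using klinear_msum[OF kcat_kmodule kcat_kmodule _ assms(1)] kcat_comp_kbilinear assms(2)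
  by (simp add: kbilinear_def)

lemma kcat_comp_msum:
  assumes "a \<in> carr (hom K x y)" and "set bs \<subseteq> carr (hom K y z)"
  shows "comp K x y z a (msum (hom K y z) bs) = msum (hom K x z) (map (comp K x y z a) bs)"
  using klinear_msum[OF kcat_kmodule kcat_kmodule _ assms(2)] kcat_comp_kbilinear assms(1)
  by (simp add: kbilinear_def)

end

locale hopf_comodule_category =
  fixes H :: "('x, 'k::comm_ring_1, 'h) kcat"
    and \<Delta> :: "'x \<Rightarrow> 'x \<Rightarrow> 'h \<Rightarrow> ('h \<times> 'h) list"
    and \<epsilon> :: "'x \<Rightarrow> 'x \<Rightarrow> 'h \<Rightarrow> 'k"
    and S :: "'x \<Rightarrow> 'x \<Rightarrow> 'h \<Rightarrow> 'h"
    and A :: "('x, 'k, 'a) kcat"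
    and \<rho> :: "'x \<Rightarrow> 'x \<Rightarrow> 'a \<Rightarrow> ('a \<times> 'h) list"
  assumes hopf: "hopf_category H \<Delta> \<epsilon> S"
    and comodule: "comodule_category H \<Delta> \<epsilon> A \<rho>"
begin

lemma H_kcat: "klinear_category H"
  using hopf by (simp add: hopf_category_def semi_hopf_category_def)

lemma A_kcat: "klinear_category A"
  using comodule by (simp add: comodule_category_def)

lemma H_coalgebra: "kcoalgebra (hom H x y) (\<Delta> x y) (\<epsilon> x y)"
  using hopf by (simp add: hopf_category_def semi_hopf_category_def)

lemma A_comodule: "kcomodule (hom A x y) (hom H x y) (\<Delta> x y) (\<epsilon> x y) (\<rho> x y)"
  using comodule by (simp add: comodule_category_def)

lemma antipode_linear: "klinear (hom H x y) (hom H y x) (S x y)"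
  using hopf by (simp add: hopf_category_def)

lemma antipode_closed: "h \<in> carr (hom H x y) \<Longrightarrow> S x y h \<in> carr (hom H y x)"
  using antipode_linear by (simp add: klinear_def)

lemma antipode_right:
  "h \<in> carr (hom H x y) \<Longrightarrow>
    msum (hom H x x) (map (\<lambda>(u, v). comp H x y x u (S x y v)) (\<Delta> x y h)) = smul (hom H x x) (\<epsilon> x y h) (ident H x)"
  using hopf by (simp add: hopf_category_def)

lemma antipode_left:
  "h \<in> carr (hom H x y) \<Longrightarrow>
    msum (hom H y y) (map (\<lambda>(u, v). comp H y x y (S x y u) v) (\<Delta> x y h)) = smul (hom H y y) (\<epsilon> x y h) (ident H y)"
  using hopf by (simp add: hopf_category_def)

lemma coaction_comp:
  "a \<in> carr (hom A x y) \<Longrightarrow> b \<in> carr (hom A y z) \<Longrightarrow>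
    eq_mod (tgens (hom A x z) (hom H x z)) (\<rho> x z (comp A x y z a b))
      (List.bind (\<rho> x y a) (\<lambda>(a0, a1). map (\<lambda>(b0, b1). (comp A x y z a0 b0, comp H x y z a1 b1)) (\<rho> y z b)))"
  using comodule by (simp add: comodule_category_def tens_eq_iff_eq_mod List.bind_def)

lemma comultiplication_closed:
  "h \<in> carr (hom H x y) \<Longrightarrow> (u, v) \<in> set (\<Delta> x y h) \<Longrightarrow> u \<in> carr (hom H x y) \<and> v \<in> carr (hom H x y)"
  by (rule comultiplication_mem[OF H_coalgebra])

lemma antipode_left_contract:
  assumes h: "h \<in> carr (hom H z y)" and g: "g \<in> carr (hom H y x)"
  shows "msum (hom H y x) (map (\<lambda>(u, v). comp H y z x (S z y u) (comp H z y x v g)) (\<Delta> z y h))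
    = smul (hom H y x) (\<epsilon> z y h) g"
proof -
  let ?ws = "map (\<lambda>(u, v). comp H y z y (S z y u) v) (\<Delta> z y h)"
  have ws: "set ?ws \<subseteq> carr (hom H y y)"
    using comultiplication_closed[OF h] kcat_comp_closed[OF H_kcat] antipode_closed by fastforce
  have "map (\<lambda>(u, v). comp H y z x (S z y u) (comp H z y x v g)) (\<Delta> z y h)
      = map (\<lambda>w. comp H y y x w g) ?ws"
    using comultiplication_closed[OF h] antipode_closed g
    by (auto simp: kcat_comp_assoc[OF H_kcat])
  also have "msum (hom H y x) \<dots> = comp H y y x (msum (hom H y y) ?ws) g"
    by (rule kcat_msum_comp[OF H_kcat ws g, symmetric])
  also have "\<dots> = smul (hom H y x) (\<epsilon> z y h) g"
    by (simp add: antipode_left[OF h] kcat_smul_ident_comp[OF H_kcat g])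
  finally show ?thesis .
qed

lemma antipode_right_contract:
  assumes h: "h \<in> carr (hom H z y)" and g: "g \<in> carr (hom H z x)"
  shows "msum (hom H z x) (map (\<lambda>(u, v). comp H z y x u (comp H y z x (S z y v) g)) (\<Delta> z y h))
    = smul (hom H z x) (\<epsilon> z y h) g"
proof -
  let ?ws = "map (\<lambda>(u, v). comp H z y z u (S z y v)) (\<Delta> z y h)"
  have ws: "set ?ws \<subseteq> carr (hom H z z)"
    using comultiplication_closed[OF h] kcat_comp_closed[OF H_kcat] antipode_closed by fastforce
  have "map (\<lambda>(u, v). comp H z y x u (comp H y z x (S z y v) g)) (\<Delta> z y h)
      = map (\<lambda>w. comp H z z x w g) ?ws"
    using comultiplication_closed[OF h] antipode_closed g
    by (auto simp: kcat_comp_assoc[OF H_kcat])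
  also have "msum (hom H z x) \<dots> = comp H z z x (msum (hom H z z) ?ws) g"
    by (rule kcat_msum_comp[OF H_kcat ws g, symmetric])
  also have "\<dots> = smul (hom H z x) (\<epsilon> z y h) g"
    by (simp add: antipode_right[OF h] kcat_smul_ident_comp[OF H_kcat g])
  finally show ?thesis .
qed

lemma comp_antipode_right_contract:
  assumes h: "h \<in> carr (hom H x y)" and f: "f \<in> carr (hom H z x)"
  shows "msum (hom H z x) (map (\<lambda>(u, v). comp H z y x (comp H z x y f u) (S x y v)) (\<Delta> x y h))
    = smul (hom H z x) (\<epsilon> x y h) f"
proof -
  let ?ws = "map (\<lambda>(u, v). comp H x y x u (S x y v)) (\<Delta> x y h)"
  have ws: "set ?ws \<subseteq> carr (hom H x x)"
    using comultiplication_closed[OF h] kcat_comp_closed[OF H_kcat] antipode_closed by fastforce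
  have "map (\<lambda>(u, v). comp H z y x (comp H z x y f u) (S x y v)) (\<Delta> x y h)
      = map (comp H z x x f) ?ws"
    using comultiplication_closed[OF h] antipode_closed f
    by (auto simp: kcat_comp_assoc[OF H_kcat])
  also have "msum (hom H z x) \<dots> = comp H z x x f (msum (hom H x x) ?ws)"
    by (rule kcat_comp_msum[OF H_kcat f ws, symmetric])
  also have "\<dots> = smul (hom H z x) (\<epsilon> x y h) f"
    by (simp add: antipode_right[OF h] kcat_comp_smul_ident[OF H_kcat f])
  finally show ?thesis .
qed

lemma antipode_comp_kbilinear:
  "kbilinear (hom H z y) (hom H z x) (hom H y x) (\<lambda>h g. comp H y z x (S z y h) g)"
  using kcat_comp_kbilinear[OF H_kcat, of y z x] antipode_linear[of z y] antipode_closed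
  by (auto simp: kbilinear_def intro: klinear_comp)

lemma galois_twist_induces_bij:
  "induces_bij (hom A z y) (hom H y x) {} (hom A z y) (hom H z x) {} (coaction_twist (\<rho> z y) (comp H z y x))"
  by (rule coaction_twist_induces_bij[OF H_coalgebra A_comodule kcat_kmodule[OF H_kcat]
        kcat_kmodule[OF H_kcat] kcat_comp_kbilinear[OF H_kcat] antipode_comp_kbilinear])
    (simp_all add: antipode_left_contract antipode_right_contract)

lemma can_in_tens:
  "in_tens (hom A z x) (hom A x y) xs \<Longrightarrow> in_tens (hom A z y) (hom H x y) (can A \<rho> z x y xs)"
  using coaction_mem[OF A_comodule] kcat_comp_closed[OF A_kcat]
  by (fastforce simp: in_tens_def can_def)

lemma can'_in_tens:
  "in_tens (hom A z x) (hom A x y) xs \<Longrightarrow> in_tens (hom A z y) (hom H z x) (can' A \<rho> z x y xs)"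
  using coaction_mem[OF A_comodule] kcat_comp_closed[OF A_kcat]
  by (fastforce simp: in_tens_def can'_def)

lemma comp_antipode_kbilinear:
  assumes f: "f \<in> carr (hom H z x)"
  shows "kbilinear (hom H x y) (hom H x y) (hom H z x) (\<lambda>d c. comp H z y x (comp H z x y f d) (S x y c))"
  unfolding kbilinear_def
proof (intro conjI ballI)
  fix c assume "c \<in> carr (hom H x y)"
  then show "klinear (hom H x y) (hom H z x) (\<lambda>d. comp H z y x (comp H z x y f d) (S x y c))"
    by (intro klinear_comp[OF kcat_linear_left[OF H_kcat f] kcat_linear_right[OF H_kcat]] antipode_closed)
next
  fix d assume "d \<in> carr (hom H x y)"
  then show "klinear (hom H x y) (hom H z x) (\<lambda>c. comp H z y x (comp H z x y f d) (S x y c))"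
    by (intro klinear_comp[OF antipode_linear kcat_linear_left[OF H_kcat]] kcat_comp_closed[OF H_kcat f])
qed

lemma coaction_antipode_contract:
  assumes a: "a \<in> carr (hom A z x)" and f: "f \<in> carr (hom H z x)" and b: "b \<in> carr (hom A x y)"
  shows "eq_mod (tgens (hom A z y) (hom H z x))
    (List.bind (\<rho> x y b) (\<lambda>(c0, c1). map (\<lambda>(d0, d1).
      (comp A z x y a d0, comp H z y x (comp H z x y f d1) (S x y c1))) (\<rho> x y c0)))
    [(comp A z x y a b, f)]"
  by (rule coaction_contract[OF H_coalgebra A_comodule kcat_kmodule[OF A_kcat] kcat_kmodule[OF H_kcat]
        kcat_linear_left[OF A_kcat a] comp_antipode_kbilinear[OF f] f _ b])
    (simp add: comp_antipode_right_contract f)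

text \<open>Expand \<open>(a a')\<^sub>[\<^sub>0\<^sub>] \<otimes> (a a')\<^sub>[\<^sub>1\<^sub>]\<close> by multiplicativity of the coaction, exchange the
  two sums, and contract the inner one.\<close>

lemma can'_eq_twist_can_single:
  assumes a: "a \<in> carr (hom A z x)" and a': "a' \<in> carr (hom A x y)"
  shows "eq_mod (tgens (hom A z y) (hom H z x))
    (coaction_twist (\<rho> z y) (comp H z y x) (map (apsnd (S x y)) (can A \<rho> z x y [(a, a')])))
    (can' A \<rho> z x y [(a, a')])"
proof -
  let ?G = "tgens (hom A z y) (hom H z x)"
  define F where "F = (\<lambda>v u. map (\<lambda>b. (comp A z x y (fst v) (fst b),
      comp H z y x (comp H z x y (snd v) (snd b)) (S x y (snd u)))) (\<rho> x y (fst u)))"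
  have "coaction_twist (\<rho> z y) (comp H z y x) (map (apsnd (S x y)) (can A \<rho> z x y [(a, a')]))
      = List.bind (\<rho> x y a') (\<lambda>u. map (map_prod id (\<lambda>c. comp H z y x c (S x y (snd u))))
          (\<rho> z y (comp A z x y a (fst u))))"
    by (simp add: coaction_twist_def can_def List.bind_def[symmetric] bind_normalize map_prod_def)
  also have "eq_mod ?G \<dots> (List.bind (\<rho> x y a') (\<lambda>u. List.bind (\<rho> z x a) (\<lambda>v. F v u)))"
  proof (rule eq_mod_bind_pointwise)
    fix u assume "u \<in> set (\<rho> x y a')"
    then have u: "fst u \<in> carr (hom A x y)" "snd u \<in> carr (hom H x y)"
      using coaction_mem[OF A_comodule a', of "fst u" "snd u"] by auto
    have "eq_mod ?G (map (map_prod id (\<lambda>c. comp H z y x c (S x y (snd u)))) (\<rho> z y (comp A z x y a (fst u))))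
        (map (map_prod id (\<lambda>c. comp H z y x c (S x y (snd u))))
          (List.bind (\<rho> z x a) (\<lambda>(a0, a1). map (\<lambda>(b0, b1). (comp A z x y a0 b0, comp H z x y a1 b1))
            (\<rho> x y (fst u)))))"
      by (rule eq_mod_map_tensor[OF klinear_id kcat_linear_right[OF H_kcat antipode_closed[OF u(2)]]
            coaction_comp[OF a u(1)]])
    then show "eq_mod ?G (map (map_prod id (\<lambda>c. comp H z y x c (S x y (snd u))))
        (\<rho> z y (comp A z x y a (fst u)))) (List.bind (\<rho> z x a) (\<lambda>v. F v u))"
      by (simp add: F_def bind_normalize map_prod_def)
  qed
  also have "eq_mod ?G \<dots> (List.bind (\<rho> z x a) (\<lambda>v. List.bind (\<rho> x y a') (\<lambda>u. F v u)))"
    by (rule eq_mod_bind_swap)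
  also have "eq_mod ?G \<dots> (List.bind (\<rho> z x a) (\<lambda>v. [(comp A z x y (fst v) a', snd v)]))"
  proof (rule eq_mod_bind_pointwise)
    fix v assume "v \<in> set (\<rho> z x a)"
    then have "fst v \<in> carr (hom A z x)" "snd v \<in> carr (hom H z x)"
      using coaction_mem[OF A_comodule a, of "fst v" "snd v"] by auto
    from coaction_antipode_contract[OF this a']
    show "eq_mod ?G (List.bind (\<rho> x y a') (F v)) [(comp A z x y (fst v) a', snd v)]"
      by (simp add: F_def split_def)
  qed
  also have "\<dots> = can' A \<rho> z x y [(a, a')]"
    by (simp add: can'_def List.bind_def[symmetric] bind_singleton split_def)
  finally show ?thesis .
qed

lemma can'_eq_twist_can:
  assumes "in_tens (hom A z x) (hom A x y) xs"
  shows "tens_eq (hom A z y) (hom H z x) {}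
    (coaction_twist (\<rho> z y) (comp H z y x) (map (apsnd (S x y)) (can A \<rho> z x y xs)))
    (can' A \<rho> z x y xs)"
proof -
  have "can A \<rho> z x y xs = List.bind xs (\<lambda>p. can A \<rho> z x y [p])"
    and "can' A \<rho> z x y xs = List.bind xs (\<lambda>p. can' A \<rho> z x y [p])"
    by (simp_all add: can_def can'_def List.bind_def)
  moreover have "eq_mod (tgens (hom A z y) (hom H z x))
      (List.bind xs (\<lambda>p. coaction_twist (\<rho> z y) (comp H z y x) (map (apsnd (S x y)) (can A \<rho> z x y [p]))))
      (List.bind xs (\<lambda>p. can' A \<rho> z x y [p]))"
    using assms can'_eq_twist_can_single by (intro eq_mod_bind_pointwise) (auto simp: in_tens_def)
  ultimately show ?thesis
    by (simp add: tens_eq_iff_eq_mod map_bind coaction_twist_bind)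
qed

lemma can'_induces_bij_iff_can_induces_bij:
  assumes S_bij: "bij_betw (S x y) (carr (hom H x y)) (carr (hom H y x))"
  shows "induces_bij (hom A z x) (hom A x y) (bal_rel H A \<rho> z x y) (hom A z y) (hom H z x) {} (can' A \<rho> z x y)
    \<longleftrightarrow> induces_bij (hom A z x) (hom A x y) (bal_rel H A \<rho> z x y) (hom A z y) (hom H x y) {} (can A \<rho> z x y)"
    (is "induces_bij ?M ?N ?E ?P ?Q' {} ?can' \<longleftrightarrow> induces_bij _ _ _ _ ?Q _ ?can")
proof -
  let ?\<tau> = "\<lambda>ys. coaction_twist (\<rho> z y) (comp H z y x) (map (apsnd (S x y)) ys)"
  have \<tau>: "induces_bij ?P ?Q {} ?P ?Q' {} ?\<tau>"
    by (rule induces_bij_comp[OF map_apsnd_induces_bij[OF kcat_kmodule[OF H_kcat] kcat_kmodule[OF H_kcat]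
          antipode_linear S_bij] galois_twist_induces_bij])
  have \<tau>_can_in: "in_tens ?P ?Q' (?\<tau> (?can xs))" if "in_tens ?M ?N xs" for xs
    using \<tau> can_in_tens[OF that] unfolding induces_bij_def by blast
  show ?thesis
  proof
    assume "induces_bij ?M ?N ?E ?P ?Q' {} ?can'"
    then have "induces_bij ?M ?N ?E ?P ?Q' {} (\<lambda>xs. ?\<tau> (?can xs))"
      by (rule induces_bij_cong)
        (use \<tau>_can_in can'_eq_twist_can in \<open>auto simp: tens_eq_iff_eq_mod intro: eq_mod_sym\<close>)
    then show "induces_bij ?M ?N ?E ?P ?Q {} ?can"
      by (rule induces_bij_comp_cancel[OF _ \<tau> can_in_tens])
  next
    assume "induces_bij ?M ?N ?E ?P ?Q {} ?can"
    then have "induces_bij ?M ?N ?E ?P ?Q' {} (\<lambda>xs. ?\<tau> (?can xs))"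
      by (rule induces_bij_comp[OF _ \<tau>])
    then show "induces_bij ?M ?N ?E ?P ?Q' {} ?can'"
      by (rule induces_bij_cong) (simp_all add: can'_in_tens can'_eq_twist_can)
  qed
qed

end

theorem theorem3p14:
  fixes H :: "('x, 'k::comm_ring_1, 'h) kcat"
    and \<Delta> :: "'x \<Rightarrow> 'x \<Rightarrow> 'h \<Rightarrow> ('h \<times> 'h) list"
    and \<epsilon> :: "'x \<Rightarrow> 'x \<Rightarrow> 'h \<Rightarrow> 'k"
    and S :: "'x \<Rightarrow> 'x \<Rightarrow> 'h \<Rightarrow> 'h"
    and A :: "('x, 'k, 'a) kcat"
    and \<rho> :: "'x \<Rightarrow> 'x \<Rightarrow> 'a \<Rightarrow> ('a \<times> 'h) list"
  assumes "hopf_category H \<Delta> \<epsilon> S"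
    and "\<forall>x y. bij_betw (S x y) (carr (hom H x y)) (carr (hom H y x))"
    and "comodule_category H \<Delta> \<epsilon> A \<rho>"
  shows "(\<forall>x y z. induces_bij (hom A z x) (hom A x y) (bal_rel H A \<rho> z x y)
                              (hom A z y) (hom H z x) {} (can' A \<rho> z x y))
     \<longleftrightarrow> (\<forall>x y z. induces_bij (hom A z x) (hom A x y) (bal_rel H A \<rho> z x y)
                              (hom A z y) (hom H x y) {} (can A \<rho> z x y))"
proof -
  interpret hopf_comodule_category H \<Delta> \<epsilon> S A \<rho>
    using assms(1,3) by unfold_locales
  show ?thesis
    using can'_induces_bij_iff_can_induces_bij assms(2) by blast
qed

end
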